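(* Under Assumptions 1 and 3, suppose $(\pi_n,Q_n)\to(\pi,Q)$ in $\mathcal S\times\mathcal Q_c$ and $\{\pi_n\}$ satisfies the uniform integrability condition $$\lim_{L\to\infty}\sup_{n\ge1}\int_{\{\|x\|^2\ge L\}}\|x\|^2\,\pi_n(dx)=0.$$ Then $c(\pi_n,Q_n)\to c(\pi,Q)$.
   Context: Assumption 1: the source is $x_{t+1}=f(x_t,w_t)$ with $f:\mathbb R^d\times\mathbb R^d\to\mathbb R^d$ Borel, $\{w_t\}$ i.i.d. and independent of $x_0\sim\pi_0$; for each $x$ the law of $f(x,w_0)$ has a density $\phi(\cdot|x)$ which is strictly positive everywhere, bounded by $C$ and $C_1$-Lipschitz, uniformly in $x$. Assumption 3: (i) $\|f(x,w)\|\le K(\|x\|+\|w\|)$ for some $K>0$; (ii) $\mathbb U=\mathbb R^d$ and $c_0(x,u)=\|x-u\|^2$; (iii) the law $\nu_w$ of $w_t$ satisfies $\int\|z\|^2\nu_w(dz)<\infty$; (iv) $\pi_0$ has a density with finite second moment or is a point mass. $\mathcal S$: probability measures on $\mathbb R^d$ with density bounded by $C$ and $C_1$-Lipschitz (weak = total variation topology). $\mathcal Q_c$: Borel maps $Q:\mathbb R^d\to\{1,\dots,M\}$ with all cells convex, topologized by: fix $P$ with strictly positive density, identify $Q,Q'$ if $PQ=PQ'$, and $Q_n\to Q$ iff $PQ_n\to PQ$ weakly, where $PQ(A\times\{i\})=P(A\cap Q^{-1}(i))$. Product topology on $\mathcal S\times\mathcal Q_c$. Cost: $c(\pi,Q)=\sum_{i=1}^M\inf_{u\in\mathbb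 R^d}\int_{Q^{-1}(i)}\|x-u\|^2\pi(dx)$. *)

theory Defs
  imports "HOL-Probability.Probability"
begin

definition in_S :: "real \<Rightarrow> real \<Rightarrow> 'a::euclidean_space measure \<Rightarrow> bool" where
  "in_S C C1 \<mu> \<longleftrightarrow> prob_space \<mu> \<and>
     (\<exists>g. g \<in> borel_measurable borel \<and> (\<forall>x. 0 \<le> g x \<and> g x \<le> C) \<and>
          C1-lipschitz_on UNIV g \<and> \<mu> = density lborel (\<lambda>x. ennreal (g x)))"

definition tv_dist :: "'a::euclidean_space measure \<Rightarrow> 'a measure \<Rightarrow> real" where
  "tv_dist \<mu> \<nu> = (SUP A \<in> sets borel. \<bar>measure \<mu> A - measure \<nu> A\<bar>)"

definition in_Qc :: "nat \<Rightarrow> ('a::euclidean_space \<Rightarrow> nat) \<Rightarrow> bool" where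
  "in_Qc M Q \<longleftrightarrow> Q \<in> borel_measurable borel \<and> (\<forall>x. Q x \<in> {1..M}) \<and>
     (\<forall>i\<in>{1..M}. convex (Q -` {i}))"

definition pos_density_prob :: "'a::euclidean_space measure \<Rightarrow> bool" where
  "pos_density_prob P \<longleftrightarrow> prob_space P \<and>
     (\<exists>g. g \<in> borel_measurable borel \<and> (\<forall>x. 0 < g x) \<and> P = density lborel (\<lambda>x. ennreal (g x)))"

definition PQ :: "'a::euclidean_space measure \<Rightarrow> ('a \<Rightarrow> nat) \<Rightarrow> ('a \<times> nat) measure" where
  "PQ P Q = distr P borel (\<lambda>x. (x, Q x))"

definition weak_conv :: "(nat \<Rightarrow> 'b::topological_space measure) \<Rightarrow> 'b measure \<Rightarrow> bool" where
  "weak_conv \<mu>s \<mu> \<longleftrightarrow> (\<forall>h :: 'b \<Rightarrow> real. continuous_on UNIV h \<and> bounded (range h) \<longrightarrow>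
     (\<lambda>n. \<integral>z. h z \<partial>\<mu>s n) \<longlonglongrightarrow> (\<integral>z. h z \<partial>\<mu>))"

definition Q_conv :: "'a::euclidean_space measure \<Rightarrow> (nat \<Rightarrow> 'a \<Rightarrow> nat) \<Rightarrow> ('a \<Rightarrow> nat) \<Rightarrow> bool" where
  "Q_conv P Qs Q \<longleftrightarrow> weak_conv (\<lambda>n. PQ P (Qs n)) (PQ P Q)"

definition cost :: "nat \<Rightarrow> 'a::euclidean_space measure \<Rightarrow> ('a \<Rightarrow> nat) \<Rightarrow> ennreal" where
  "cost M \<pi> Q = (\<Sum>i\<in>{1..M}. INF u. \<integral>\<^sup>+x\<in>Q -` {i}. ennreal ((norm (x - u))\<^sup>2) \<partial>\<pi>)"

end

theory Submission
  imports Defs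
begin

text \<open>Write \<open>\<pi>\<^sub>n = g\<^sub>n dx\<close>, \<open>\<pi> = g dx\<close>. Total variation convergence is \<open>L\<^sup>1\<close> convergence
  \<open>g\<^sub>n \<rightarrow> g\<close>, and the uniform integrability of \<open>\<parallel>x\<parallel>\<^sup>2\<close> upgrades it to convergence in
  \<open>L\<^sup>1((1 + \<parallel>x\<parallel>\<^sup>2) dx)\<close>. Weak convergence of \<open>PQ\<^sub>n\<close> forces \<open>P\<close>-measure of the symmetric
  difference of the \<open>i\<close>-th cells of \<open>Q\<^sub>n\<close> and \<open>Q\<close> to vanish: test functions supported in the
  interior resp. exterior of the convex cell of \<open>Q\<close> control everything except its frontier,
  which is Lebesgue-null. Since \<open>P\<close> has a strictly positive density, the symmetric differences
  are then also negligible for the weight \<open>(1 + \<parallel>x\<parallel>\<^sup>2) g\<close>, so the restricted densities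
  \<open>1\<^bsub>cell\<^esub> g\<^sub>n\<close> converge in \<open>L\<^sup>1((1 + \<parallel>x\<parallel>\<^sup>2) dx)\<close>. Hence \<open>u \<mapsto> \<integral>\<^bsub>cell\<^esub> \<parallel>x - u\<parallel>\<^sup>2 \<pi>\<^sub>n(dx)\<close>
  converges locally uniformly and is uniformly coercive, so its infimum converges.\<close>

definition prob_density :: "('a::euclidean_space \<Rightarrow> real) \<Rightarrow> bool" where
  "prob_density g \<longleftrightarrow> g \<in> borel_measurable borel \<and> (\<forall>x. 0 \<le> g x) \<and> integrable lborel g \<and>
     (\<integral>x. g x \<partial>lborel) = 1"

lemma prob_space_density_of_prob_density:
  assumes "prob_density g"
  shows "prob_space (density lborel (\<lambda>x. ennreal (g x)))"
proof
  have "(\<integral>\<^sup>+x. ennreal (g x) \<partial>lborel) = ennreal (\<integral>x. g x \<partial>lborel)"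
    using assms by (intro nn_integral_eq_integral) (auto simp: prob_density_def)
  then show "emeasure (density lborel (\<lambda>x. ennreal (g x))) (space (density lborel (\<lambda>x. ennreal (g x)))) = 1"
    using assms by (simp add: emeasure_density prob_density_def)
qed

lemma in_S_obtain_prob_density:
  assumes "in_S C C1 \<mu>"
  obtains g where "prob_density g" "\<mu> = density lborel (\<lambda>x. ennreal (g x))"
proof -
  from assms obtain g where g: "g \<in> borel_measurable borel" "\<forall>x. 0 \<le> g x"
      "\<mu> = density lborel (\<lambda>x. ennreal (g x))" and ps: "prob_space \<mu>"
    unfolding in_S_def by blast
  have n: "(\<integral>\<^sup>+x. ennreal (g x) \<partial>lborel) = 1"
    using prob_space.emeasure_space_1[OF ps] g by (simp add: emeasure_density)
  have i: "integrable lborel g"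
    using n g by (intro integrableI_nonneg) auto
  have "ennreal (\<integral>x. g x \<partial>lborel) = 1"
    using n g i by (subst nn_integral_eq_integral[symmetric]) auto
  with g i show ?thesis by (intro that) (auto simp: prob_density_def)
qed

lemma pos_density_prob_obtain_density:
  assumes "pos_density_prob P"
  obtains p where "p \<in> borel_measurable borel" "\<And>x. 0 < p x" "integrable lborel p"
    "P = density lborel (\<lambda>x. ennreal (p x))"
proof -
  from assms obtain p where p: "p \<in> borel_measurable borel" "\<forall>x. 0 < p x"
      "P = density lborel (\<lambda>x. ennreal (p x))" and ps: "prob_space P"
    unfolding pos_density_prob_def by blast
  have "(\<integral>\<^sup>+x. ennreal (p x) \<partial>lborel) = 1"
    using prob_space.emeasure_space_1[OF ps] p by (simp add: emeasure_density)
  then have "integrable lborel p"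
    using p by (intro integrableI_nonneg) (auto simp: less_imp_le)
  with p show ?thesis by (intro that) auto
qed

lemma measure_density_eq_integral:
  fixes g :: "'a::euclidean_space \<Rightarrow> real"
  assumes "g \<in> borel_measurable borel" "\<And>x. 0 \<le> g x" "integrable lborel g" "A \<in> sets borel"
  shows "measure (density lborel (\<lambda>x. ennreal (g x))) A = (\<integral>x. indicator A x * g x \<partial>lborel)"
proof -
  have "emeasure (density lborel (\<lambda>x. ennreal (g x))) A
      = (\<integral>\<^sup>+x. ennreal (indicator A x * g x) \<partial>lborel)"
    using assms by (subst emeasure_density)
      (auto intro!: nn_integral_cong simp: ennreal_mult' mult.commute split: split_indicator)
  also have "\<dots> = ennreal (\<integral>x. indicator A x * g x \<partial>lborel)"
    using assms integrable_mult_indicator[of A lborel g] by (intro nn_integral_eq_integral) auto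
  finally show ?thesis unfolding measure_def using assms by (simp add: integral_nonneg)
qed

lemma set_nn_integral_density_eq_integral:
  fixes f g :: "'a::euclidean_space \<Rightarrow> real"
  assumes "f \<in> borel_measurable borel" "\<And>x. 0 \<le> f x"
    and "g \<in> borel_measurable borel" "\<And>x. 0 \<le> g x"
    and "A \<in> sets borel" "integrable lborel (\<lambda>x. f x * g x)"
  shows "(\<integral>\<^sup>+x\<in>A. ennreal (f x) \<partial>density lborel (\<lambda>x. ennreal (g x)))
    = ennreal (\<integral>x. indicator A x * (f x * g x) \<partial>lborel)"
proof -
  have "(\<integral>\<^sup>+x\<in>A. ennreal (f x) \<partial>density lborel (\<lambda>x. ennreal (g x)))
      = (\<integral>\<^sup>+x. ennreal (g x) * (ennreal (f x) * indicator A x) \<partial>lborel)"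
    using assms(1-5) by (subst nn_integral_density) auto
  also have "\<dots> = (\<integral>\<^sup>+x. ennreal (indicator A x * (f x * g x)) \<partial>lborel)"
    using assms(2,4) by (intro nn_integral_cong)
      (auto simp: indicator_def ennreal_mult'[symmetric] mult.commute)
  also have "\<dots> = ennreal (\<integral>x. indicator A x * (f x * g x) \<partial>lborel)"
    using assms integrable_mult_indicator[of A lborel "\<lambda>x. f x * g x"]
    by (intro nn_integral_eq_integral) auto
  finally show ?thesis .
qed

lemma L1_dist_le_tv_dist:
  fixes g h :: "'a::euclidean_space \<Rightarrow> real"
  assumes g: "prob_density g" and h: "prob_density h"
  shows "(\<integral>x. \<bar>g x - h x\<bar> \<partial>lborel)
    \<le> 2 * tv_dist (density lborel (\<lambda>x. ennreal (g x))) (density lborel (\<lambda>x. ennreal (h x)))"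
proof -
  let ?\<mu> = "density lborel (\<lambda>x. ennreal (g x))" and ?\<nu> = "density lborel (\<lambda>x. ennreal (h x))"
  note gd = g[unfolded prob_density_def] and hd = h[unfolded prob_density_def]
  define A where "A = {x. h x \<le> g x}"
  from gd hd have "g \<in> borel_measurable borel" "h \<in> borel_measurable borel" by auto
  then have A: "A \<in> sets borel" unfolding A_def by measurable
  have iA: "integrable lborel (\<lambda>x. indicator A x * g x)" "integrable lborel (\<lambda>x. indicator A x * h x)"
    using integrable_mult_indicator[of A lborel g] integrable_mult_indicator[of A lborel h] A gd hd
    by auto
  have "\<bar>g x - h x\<bar> = 2 * (indicator A x * g x - indicator A x * h x) - (g x - h x)" for x
    by (auto simp: A_def indicator_def)
  then have "(\<integral>x. \<bar>g x - h x\<bar> \<partial>lborel)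
      = 2 * ((\<integral>x. indicator A x * g x \<partial>lborel) - (\<integral>x. indicator A x * h x \<partial>lborel))
        - ((\<integral>x. g x \<partial>lborel) - (\<integral>x. h x \<partial>lborel))"
    using iA gd hd by (simp add: integral_diff)
  also have "\<dots> = 2 * (measure ?\<mu> A - measure ?\<nu> A)"
    using gd hd A by (simp add: measure_density_eq_integral)
  also have "\<dots> \<le> 2 * tv_dist ?\<mu> ?\<nu>"
  proof -
    have "bdd_above ((\<lambda>A. \<bar>measure ?\<mu> A - measure ?\<nu> A\<bar>) ` sets borel)"
      using prob_space.prob_le_1[OF prob_space_density_of_prob_density[OF g]]
        prob_space.prob_le_1[OF prob_space_density_of_prob_density[OF h]]
      by (intro bdd_aboveI[where M=1]) (auto simp: abs_le_iff, (smt (verit) measure_nonneg)+)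
    then have "\<bar>measure ?\<mu> A - measure ?\<nu> A\<bar> \<le> tv_dist ?\<mu> ?\<nu>"
      unfolding tv_dist_def by (rule cSUP_upper[OF A])
    then show ?thesis by simp
  qed
  finally show ?thesis .
qed

lemma L1_dist_tendsto_0_of_tv_dist:
  fixes gs :: "nat \<Rightarrow> 'a::euclidean_space \<Rightarrow> real"
  assumes "\<And>n. prob_density (gs n)" "prob_density g"
    and "(\<lambda>n. tv_dist (density lborel (\<lambda>x. ennreal (gs n x))) (density lborel (\<lambda>x. ennreal (g x))))
      \<longlonglongrightarrow> 0"
  shows "(\<lambda>n. \<integral>x. \<bar>gs n x - g x\<bar> \<partial>lborel) \<longlonglongrightarrow> 0"
proof (rule tendsto_sandwich[OF _ _ tendsto_const])
  show "\<forall>\<^sub>F n in sequentially. 0 \<le> (\<integral>x. \<bar>gs n x - g x\<bar> \<partial>lborel)"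
    by simp
  show "\<forall>\<^sub>F n in sequentially. (\<integral>x. \<bar>gs n x - g x\<bar> \<partial>lborel)
      \<le> 2 * tv_dist (density lborel (\<lambda>x. ennreal (gs n x))) (density lborel (\<lambda>x. ennreal (g x)))"
    using L1_dist_le_tv_dist[OF assms(1) assms(2)] by simp
  show "(\<lambda>n. 2 * tv_dist (density lborel (\<lambda>x. ennreal (gs n x))) (density lborel (\<lambda>x. ennreal (g x))))
      \<longlonglongrightarrow> 0"
    using tendsto_mult_right_zero[OF assms(3), of 2] by simp
qed

lemma second_moment_le_of_tail_bound:
  fixes g :: "'a::euclidean_space \<Rightarrow> real"
  assumes g: "prob_density g" and L: "0 \<le> L" and t: "0 \<le> t"
    and tail: "(\<integral>\<^sup>+x\<in>{x. L \<le> (norm x)\<^sup>2}. ennreal ((norm x)\<^sup>2) \<partial>density lborel (\<lambda>x. ennreal (g x)))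
      \<le> ennreal t"
  shows "integrable lborel (\<lambda>x. (norm x)\<^sup>2 * g x)" "(\<integral>x. (norm x)\<^sup>2 * g x \<partial>lborel) \<le> L + t"
proof -
  note gd = g[unfolded prob_density_def]
  define A where "A = {x::'a. L \<le> (norm x)\<^sup>2}"
  have A: "A \<in> sets borel" unfolding A_def by measurable
  have tail': "(\<integral>\<^sup>+x. ennreal (g x) * (ennreal ((norm x)\<^sup>2) * indicator A x) \<partial>lborel) \<le> ennreal t"
    using tail gd A unfolding A_def by (subst (asm) nn_integral_density) auto
  have g1: "(\<integral>\<^sup>+x. ennreal (g x) \<partial>lborel) = 1"
    using gd by (subst nn_integral_eq_integral) auto
  have "(\<integral>\<^sup>+x. ennreal ((norm x)\<^sup>2 * g x) \<partial>lborel)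
      \<le> (\<integral>\<^sup>+x. ennreal L * ennreal (g x) + ennreal (g x) * (ennreal ((norm x)\<^sup>2) * indicator A x) \<partial>lborel)"
  proof (rule nn_integral_mono)
    fix x
    show "ennreal ((norm x)\<^sup>2 * g x)
      \<le> ennreal L * ennreal (g x) + ennreal (g x) * (ennreal ((norm x)\<^sup>2) * indicator A x)"
    proof (cases "x \<in> A")
      case True
      then show ?thesis using gd by (simp add: ennreal_mult' mult.commute add_increasing)
    next
      case False
      then have "(norm x)\<^sup>2 * g x \<le> L * g x" using gd by (intro mult_right_mono) (auto simp: A_def)
      then show ?thesis using False L gd by (simp add: ennreal_mult'[symmetric] ennreal_leI)
    qed
  qed
  also have "\<dots> = ennreal L + (\<integral>\<^sup>+x. ennreal (g x) * (ennreal ((norm x)\<^sup>2) * indicator A x) \<partial>lborel)"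
    using gd A by (subst nn_integral_add) (auto simp: nn_integral_cmult g1)
  also have "\<dots> \<le> ennreal L + ennreal t" using tail' by (simp add: add_left_mono)
  also have "\<dots> = ennreal (L + t)" using L t by simp
  finally have le: "(\<integral>\<^sup>+x. ennreal ((norm x)\<^sup>2 * g x) \<partial>lborel) \<le> ennreal (L + t)" .
  show i: "integrable lborel (\<lambda>x. (norm x)\<^sup>2 * g x)"
    using le gd by (intro integrableI_nonneg) (auto simp: top_unique less_top[symmetric] dest: order.trans)
  have "ennreal (\<integral>x. (norm x)\<^sup>2 * g x \<partial>lborel) \<le> ennreal (L + t)"
    using le i gd by (subst nn_integral_eq_integral[symmetric]) auto
  then show "(\<integral>x. (norm x)\<^sup>2 * g x \<partial>lborel) \<le> L + t"
    using L t by (simp add: ennreal_le_iff del: ennreal_plus)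
qed

lemma uniform_second_moment_of_UI:
  fixes gs :: "nat \<Rightarrow> 'a::euclidean_space \<Rightarrow> real"
  assumes gs: "\<And>n. prob_density (gs n)"
    and UI: "((\<lambda>L::real. SUP n. \<integral>\<^sup>+x\<in>{x. L \<le> (norm x)\<^sup>2}. ennreal ((norm x)\<^sup>2)
      \<partial>density lborel (\<lambda>x. ennreal (gs n x))) \<longlongrightarrow> 0) at_top"
  obtains S where "\<And>n. integrable lborel (\<lambda>x. (norm x)\<^sup>2 * gs n x)"
    "\<And>n. (\<integral>x. (norm x)\<^sup>2 * gs n x \<partial>lborel) \<le> S"
proof -
  have "\<forall>\<^sub>F L in at_top. 0 \<le> L \<and> (SUP n. \<integral>\<^sup>+x\<in>{x. L \<le> (norm x)\<^sup>2}. ennreal ((norm x)\<^sup>2)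
      \<partial>density lborel (\<lambda>x. ennreal (gs n x))) < 1"
    using eventually_ge_at_top[of "0::real"] order_tendstoD(2)[OF UI zero_less_one]
    by eventually_elim auto
  then obtain L where L: "0 \<le> L" and tail: "(SUP n. \<integral>\<^sup>+x\<in>{x. L \<le> (norm x)\<^sup>2}. ennreal ((norm x)\<^sup>2)
      \<partial>density lborel (\<lambda>x. ennreal (gs n x))) < 1"
    using eventually_happens'[OF trivial_limit_at_top_linorder] by blast
  have "(\<integral>\<^sup>+x\<in>{x. L \<le> (norm x)\<^sup>2}. ennreal ((norm x)\<^sup>2) \<partial>density lborel (\<lambda>x. ennreal (gs n x)))
      \<le> ennreal 1" for n
    using SUP_lessD[OF tail] by (simp add: less_imp_le)
  from second_moment_le_of_tail_bound[OF gs L _ this] show ?thesis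
    by (intro that[of "L + 1"]) auto
qed

lemma second_moment_tails_of_UI:
  fixes gs :: "nat \<Rightarrow> 'a::euclidean_space \<Rightarrow> real"
  assumes gs: "\<And>n. gs n \<in> borel_measurable borel" "\<And>n x. 0 \<le> gs n x"
    "\<And>n. integrable lborel (\<lambda>x. (norm x)\<^sup>2 * gs n x)"
    and UI: "((\<lambda>L::real. SUP n. \<integral>\<^sup>+x\<in>{x. L \<le> (norm x)\<^sup>2}. ennreal ((norm x)\<^sup>2)
      \<partial>density lborel (\<lambda>x. ennreal (gs n x))) \<longlongrightarrow> 0) at_top"
    and \<epsilon>: "0 < \<epsilon>"
  shows "\<forall>\<^sub>F L in at_top. \<forall>n. (\<integral>x. indicator {x. L \<le> (norm x)\<^sup>2} x * ((norm x)\<^sup>2 * gs n x) \<partial>lborel) \<le> \<epsilon>"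
proof -
  have "0 < ennreal \<epsilon>" using \<epsilon> by simp
  from order_tendstoD(2)[OF UI this] show ?thesis
  proof eventually_elim
    case (elim L)
    show ?case
    proof
      fix n
      have "{x::'a. L \<le> (norm x)\<^sup>2} \<in> sets borel" by measurable
      then have "ennreal (\<integral>x. indicator {x. L \<le> (norm x)\<^sup>2} x * ((norm x)\<^sup>2 * gs n x) \<partial>lborel)
          = (\<integral>\<^sup>+x\<in>{x. L \<le> (norm x)\<^sup>2}. ennreal ((norm x)\<^sup>2) \<partial>density lborel (\<lambda>x. ennreal (gs n x)))"
        using gs by (intro set_nn_integral_density_eq_integral[symmetric]) auto
      also have "\<dots> < ennreal \<epsilon>"
        using SUP_lessD[OF elim] by simp
      finally show "(\<integral>x. indicator {x. L \<le> (norm x)\<^sup>2} x * ((norm x)\<^sup>2 * gs n x) \<partial>lborel) \<le> \<epsilon>"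
        using \<epsilon> ennreal_less_iff[of "\<integral>x. indicator {x. L \<le> (norm x)\<^sup>2} x * ((norm x)\<^sup>2 * gs n x) \<partial>lborel" \<epsilon>]
        by (cases "0 \<le> (\<integral>x. indicator {x. L \<le> (norm x)\<^sup>2} x * ((norm x)\<^sup>2 * gs n x) \<partial>lborel)") auto
    qed
  qed
qed

lemma integral_truncated_second_moment_le:
  fixes g :: "'a::euclidean_space \<Rightarrow> real" and gs :: "nat \<Rightarrow> 'a \<Rightarrow> real"
  assumes g: "integrable lborel g"
    and gs: "\<And>n x. 0 \<le> gs n x" "\<And>n. integrable lborel (gs n)"
    and mom: "\<And>n. integrable lborel (\<lambda>x. (norm x)\<^sup>2 * gs n x)"
      "\<And>n. (\<integral>x. (norm x)\<^sup>2 * gs n x \<partial>lborel) \<le> S"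
    and lim: "(\<lambda>n. \<integral>x. \<bar>gs n x - g x\<bar> \<partial>lborel) \<longlonglongrightarrow> 0"
  shows "(\<integral>x. min ((norm x)\<^sup>2) (real k) * g x \<partial>lborel) \<le> S"
proof (rule tendsto_le[OF trivial_limit_sequentially])
  show "(\<lambda>n. S + real k * (\<integral>x. \<bar>gs n x - g x\<bar> \<partial>lborel)) \<longlonglongrightarrow> S"
    using tendsto_add[OF tendsto_const tendsto_mult_right_zero[OF lim, of "real k"]] by simp
  have "(\<integral>x. min ((norm x)\<^sup>2) (real k) * g x \<partial>lborel)
      \<le> (\<integral>x. (norm x)\<^sup>2 * gs n x + real k * \<bar>gs n x - g x\<bar> \<partial>lborel)" for n
  proof (rule integral_mono')
    show "integrable lborel (\<lambda>x. (norm x)\<^sup>2 * gs n x + real k * \<bar>gs n x - g x\<bar>)"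
      using mom(1)[of n] gs(2)[of n] g by auto
    fix x
    have "min ((norm x)\<^sup>2) (real k) * g x
        \<le> min ((norm x)\<^sup>2) (real k) * gs n x + min ((norm x)\<^sup>2) (real k) * \<bar>gs n x - g x\<bar>"
      by (smt (verit) distrib_left mult_left_mono abs_ge_self abs_minus_commute min_def
          zero_le_power2 of_nat_0_le_iff)
    moreover have "min ((norm x)\<^sup>2) (real k) * gs n x \<le> (norm x)\<^sup>2 * gs n x"
      using gs(1)[of n x] by (intro mult_right_mono) auto
    moreover have "min ((norm x)\<^sup>2) (real k) * \<bar>gs n x - g x\<bar> \<le> real k * \<bar>gs n x - g x\<bar>"
      by (intro mult_right_mono) auto
    ultimately show "min ((norm x)\<^sup>2) (real k) * g x \<le> (norm x)\<^sup>2 * gs n x + real k * \<bar>gs n x - g x\<bar>"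
      by linarith
    show "0 \<le> (norm x)\<^sup>2 * gs n x + real k * \<bar>gs n x - g x\<bar>" using gs(1)[of n x] by simp
  qed
  also have "(\<integral>x. (norm x)\<^sup>2 * gs n x + real k * \<bar>gs n x - g x\<bar> \<partial>lborel)
      \<le> S + real k * (\<integral>x. \<bar>gs n x - g x\<bar> \<partial>lborel)" for n
    using mom(1)[of n] mom(2)[of n] gs(2)[of n] g by simp
  finally show "\<forall>\<^sub>F n in sequentially. (\<integral>x. min ((norm x)\<^sup>2) (real k) * g x \<partial>lborel)
      \<le> S + real k * (\<integral>x. \<bar>gs n x - g x\<bar> \<partial>lborel)"
    by simp
qed auto

lemma integrable_second_moment_of_L1_limit:
  fixes g :: "'a::euclidean_space \<Rightarrow> real" and gs :: "nat \<Rightarrow> 'a \<Rightarrow> real"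
  assumes g: "g \<in> borel_measurable borel" "\<And>x. 0 \<le> g x" "integrable lborel g"
    and gs: "\<And>n x. 0 \<le> gs n x" "\<And>n. integrable lborel (gs n)"
    and mom: "\<And>n. integrable lborel (\<lambda>x. (norm x)\<^sup>2 * gs n x)"
      "\<And>n. (\<integral>x. (norm x)\<^sup>2 * gs n x \<partial>lborel) \<le> S"
    and lim: "(\<lambda>n. \<integral>x. \<bar>gs n x - g x\<bar> \<partial>lborel) \<longlonglongrightarrow> 0"
  shows "integrable lborel (\<lambda>x. (norm x)\<^sup>2 * g x)"
proof -
  define h where "h k x = min ((norm x)\<^sup>2) (real k) * g x" for k :: nat and x :: 'a
  have hm: "h k \<in> borel_measurable borel" for k unfolding h_def using g by measurable
  have ih: "integrable lborel (h k)" for k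
  proof (rule Bochner_Integration.integrable_bound[OF integrable_mult_right[OF g(3), of "real k"]])
    show "AE x in lborel. norm (h k x) \<le> norm (real k * g x)"
      using g(2) by (intro AE_I2) (auto simp: h_def abs_mult intro!: mult_right_mono)
  qed (use hm in simp)
  have inc: "incseq (\<lambda>k x. ennreal (h k x))"
    by (intro incseq_SucI le_funI ennreal_leI) (auto simp: h_def intro!: mult_right_mono g(2))
  have "(\<lambda>k. ennreal (h k x)) \<longlonglongrightarrow> ennreal ((norm x)\<^sup>2 * g x)" for x
  proof (rule tendsto_eventually)
    have "\<forall>\<^sub>F k in sequentially. (norm x)\<^sup>2 \<le> real k"
      by (rule eventually_sequentiallyI[of "nat \<lceil>(norm x)\<^sup>2\<rceil>"]) linarith
    then show "\<forall>\<^sub>F k in sequentially. ennreal (h k x) = ennreal ((norm x)\<^sup>2 * g x)"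
      by eventually_elim (simp add: h_def)
  qed
  then have "(\<lambda>k. \<integral>\<^sup>+x. ennreal (h k x) \<partial>lborel) \<longlonglongrightarrow> (\<integral>\<^sup>+x. ennreal ((norm x)\<^sup>2 * g x) \<partial>lborel)"
    using inc hm by (intro nn_integral_LIMSEQ) auto
  moreover have "(\<integral>\<^sup>+x. ennreal (h k x) \<partial>lborel) \<le> ennreal S" for k
  proof -
    have "(\<integral>\<^sup>+x. ennreal (h k x) \<partial>lborel) = ennreal (\<integral>x. h k x \<partial>lborel)"
      by (intro nn_integral_eq_integral ih) (simp add: h_def g(2))
    then show ?thesis
      using integral_truncated_second_moment_le[OF g(3) gs mom lim, of k]
      by (simp add: h_def ennreal_leI)
  qed
  ultimately have "(\<integral>\<^sup>+x. ennreal ((norm x)\<^sup>2 * g x) \<partial>lborel) \<le> ennreal S"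
    by (intro LIMSEQ_le_const2) auto
  then show ?thesis
    using g by (intro integrableI_nonneg) (auto simp: less_top[symmetric] top_unique dest: order.trans)
qed

lemma integral_tail_tendsto_0:
  fixes w :: "'a::euclidean_space \<Rightarrow> real"
  assumes "w \<in> borel_measurable borel" "\<And>x. 0 \<le> w x" "integrable lborel w"
  shows "((\<lambda>L. \<integral>x. indicator {x. L \<le> (norm x)\<^sup>2} x * w x \<partial>lborel) \<longlongrightarrow> 0) at_top"
proof -
  have "((\<lambda>L. \<integral>x. indicator {x. L \<le> (norm x)\<^sup>2} x * w x \<partial>lborel) \<longlongrightarrow> (\<integral>x. 0 \<partial>(lborel :: 'a measure))) at_top"
  proof (rule integral_dominated_convergence_at_top[where w=w and f="\<lambda>x. 0"
      and s="\<lambda>L x. indicator {x. L \<le> (norm x)\<^sup>2} x * w x"])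
    show "AE x in lborel. ((\<lambda>L. indicator {x. L \<le> (norm x)\<^sup>2} x * w x) \<longlongrightarrow> 0) at_top"
    proof (rule AE_I2, rule tendsto_eventually)
      fix x :: 'a
      show "\<forall>\<^sub>F L in at_top. indicator {x. L \<le> (norm x)\<^sup>2} x * w x = 0"
        using eventually_gt_at_top[of "(norm x)\<^sup>2"] by eventually_elim (simp add: indicator_def)
    qed
    show "\<forall>\<^sub>F L in at_top. AE x in lborel. norm (indicator {x. L \<le> (norm x)\<^sup>2} x * w x) \<le> w x"
      using assms(2) by (intro always_eventually allI AE_I2) (auto simp: indicator_def)
  qed (use assms in auto)
  then show ?thesis by simp
qed

lemma weighted_L1_dist_le:
  fixes g h :: "'a::euclidean_space \<Rightarrow> real"
  assumes g: "\<And>x. 0 \<le> g x" "integrable lborel g" "integrable lborel (\<lambda>x. (norm x)\<^sup>2 * g x)"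
    and h: "\<And>x. 0 \<le> h x" "integrable lborel h" "integrable lborel (\<lambda>x. (1 + (norm x)\<^sup>2) * h x)"
    and L: "1 \<le> L" and T: "T = {x. L \<le> (norm x)\<^sup>2}"
  shows "(\<integral>x. (1 + (norm x)\<^sup>2) * \<bar>g x - h x\<bar> \<partial>lborel)
    \<le> (1 + L) * (\<integral>x. \<bar>g x - h x\<bar> \<partial>lborel) + 2 * (\<integral>x. indicator T x * ((norm x)\<^sup>2 * g x) \<partial>lborel)
      + (\<integral>x. indicator T x * ((1 + (norm x)\<^sup>2) * h x) \<partial>lborel)"
proof -
  have Tm: "T \<in> sets borel" unfolding T by measurable
  have i1: "integrable lborel (\<lambda>x. (1 + L) * \<bar>g x - h x\<bar>)" using g h by auto
  have i2: "integrable lborel (\<lambda>x. indicator T x * ((norm x)\<^sup>2 * g x))"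
    using integrable_mult_indicator[of T lborel "\<lambda>x. (norm x)\<^sup>2 * g x"] Tm g(3) by simp
  have i3: "integrable lborel (\<lambda>x. indicator T x * ((1 + (norm x)\<^sup>2) * h x))"
    using integrable_mult_indicator[of T lborel "\<lambda>x. (1 + (norm x)\<^sup>2) * h x"] Tm h(3) by simp
  have "(\<integral>x. (1 + (norm x)\<^sup>2) * \<bar>g x - h x\<bar> \<partial>lborel) \<le> (\<integral>x. (1 + L) * \<bar>g x - h x\<bar>
      + 2 * (indicator T x * ((norm x)\<^sup>2 * g x)) + indicator T x * ((1 + (norm x)\<^sup>2) * h x) \<partial>lborel)"
  proof (rule integral_mono')
    fix x
    show "(1 + (norm x)\<^sup>2) * \<bar>g x - h x\<bar> \<le> (1 + L) * \<bar>g x - h x\<bar>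
      + 2 * (indicator T x * ((norm x)\<^sup>2 * g x)) + indicator T x * ((1 + (norm x)\<^sup>2) * h x)"
    proof (cases "x \<in> T")
      case False
      then have "(1 + (norm x)\<^sup>2) * \<bar>g x - h x\<bar> \<le> (1 + L) * \<bar>g x - h x\<bar>"
        by (intro mult_right_mono) (auto simp: T)
      then show ?thesis using False by simp
    next
      case True
      then have "1 + (norm x)\<^sup>2 \<le> 2 * (norm x)\<^sup>2" using L by (auto simp: T)
      then have "(1 + (norm x)\<^sup>2) * g x \<le> (2 * (norm x)\<^sup>2) * g x"
        using g(1) by (rule mult_right_mono)
      then have "(1 + (norm x)\<^sup>2) * g x \<le> 2 * ((norm x)\<^sup>2 * g x)"
        by (simp only: mult.assoc)
      moreover have "(1 + (norm x)\<^sup>2) * \<bar>g x - h x\<bar> \<le> (1 + (norm x)\<^sup>2) * g x + (1 + (norm x)\<^sup>2) * h x"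
        using g(1)[of x] h(1)[of x] by (simp add: distrib_left[symmetric] mult_left_mono)
      moreover have "0 \<le> (1 + L) * \<bar>g x - h x\<bar>" using L by simp
      ultimately show ?thesis using True by auto
    qed
    show "0 \<le> (1 + L) * \<bar>g x - h x\<bar> + 2 * (indicator T x * ((norm x)\<^sup>2 * g x))
      + indicator T x * ((1 + (norm x)\<^sup>2) * h x)"
      using L g(1)[of x] h(1)[of x] by (simp add: indicator_def)
  qed (use i1 i2 i3 in auto)
  also have "\<dots> = (1 + L) * (\<integral>x. \<bar>g x - h x\<bar> \<partial>lborel) + 2 * (\<integral>x. indicator T x * ((norm x)\<^sup>2 * g x) \<partial>lborel)
      + (\<integral>x. indicator T x * ((1 + (norm x)\<^sup>2) * h x) \<partial>lborel)"
    using i1 i2 i3 g(2) h(2) by simp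
  finally show ?thesis .
qed

text \<open>The \<open>L\<^sup>1\<close> distance controls the weighted one on the ball \<open>\<parallel>x\<parallel>\<^sup>2 < L\<close>; outside it, the
  weighted distance is bounded by the second-moment tails, uniformly small by uniform
  integrability.\<close>

lemma weighted_L1_tendsto_0:
  fixes g :: "'a::euclidean_space \<Rightarrow> real" and gs :: "nat \<Rightarrow> 'a \<Rightarrow> real"
  assumes g: "g \<in> borel_measurable borel" "\<And>x. 0 \<le> g x" "integrable lborel g"
      "integrable lborel (\<lambda>x. (norm x)\<^sup>2 * g x)"
    and gs: "\<And>n x. 0 \<le> gs n x" "\<And>n. integrable lborel (gs n)"
      "\<And>n. integrable lborel (\<lambda>x. (norm x)\<^sup>2 * gs n x)"
    and lim: "(\<lambda>n. \<integral>x. \<bar>gs n x - g x\<bar> \<partial>lborel) \<longlonglongrightarrow> 0"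
    and tails: "\<And>\<epsilon>. 0 < \<epsilon> \<Longrightarrow>
      \<forall>\<^sub>F L in at_top. \<forall>n. (\<integral>x. indicator {x. L \<le> (norm x)\<^sup>2} x * ((norm x)\<^sup>2 * gs n x) \<partial>lborel) \<le> \<epsilon>"
  shows "(\<lambda>n. \<integral>x. (1 + (norm x)\<^sup>2) * \<bar>gs n x - g x\<bar> \<partial>lborel) \<longlonglongrightarrow> 0"
proof (rule LIMSEQ_I)
  fix r :: real assume r: "0 < r"
  define \<epsilon> where "\<epsilon> = r / 5"
  have \<epsilon>: "0 < \<epsilon>" using r by (simp add: \<epsilon>_def)
  define w where "w x = (1 + (norm x)\<^sup>2) * g x" for x
  have w: "w \<in> borel_measurable borel" "\<And>x. 0 \<le> w x" "integrable lborel w"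
    using g unfolding w_def distrib_right by auto
  have "\<forall>\<^sub>F L in at_top. 1 \<le> L \<and> (\<integral>x. indicator {x. L \<le> (norm x)\<^sup>2} x * w x \<partial>lborel) < \<epsilon> \<and>
      (\<forall>n. (\<integral>x. indicator {x. L \<le> (norm x)\<^sup>2} x * ((norm x)\<^sup>2 * gs n x) \<partial>lborel) \<le> \<epsilon>)"
    using eventually_ge_at_top[of "1::real"] order_tendstoD(2)[OF integral_tail_tendsto_0[OF w] \<epsilon>]
      tails[OF \<epsilon>]
    by eventually_elim auto
  then obtain L where L: "1 \<le> L" "(\<integral>x. indicator {x. L \<le> (norm x)\<^sup>2} x * w x \<partial>lborel) < \<epsilon>"
    "\<And>n. (\<integral>x. indicator {x. L \<le> (norm x)\<^sup>2} x * ((norm x)\<^sup>2 * gs n x) \<partial>lborel) \<le> \<epsilon>"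
    using eventually_happens'[OF trivial_limit_at_top_linorder] by blast
  from order_tendstoD(2)[OF tendsto_mult_right_zero[OF lim, of "1 + L"] \<epsilon>] obtain N where
    N: "\<And>n. N \<le> n \<Longrightarrow> (1 + L) * (\<integral>x. \<bar>gs n x - g x\<bar> \<partial>lborel) < \<epsilon>"
    by (auto simp: eventually_sequentially)
  show "\<exists>N. \<forall>n\<ge>N. norm ((\<integral>x. (1 + (norm x)\<^sup>2) * \<bar>gs n x - g x\<bar> \<partial>lborel) - 0) < r"
  proof (intro exI allI impI)
    fix n assume n: "N \<le> n"
    have "0 \<le> (\<integral>x. (1 + (norm x)\<^sup>2) * \<bar>gs n x - g x\<bar> \<partial>lborel)"
      by (intro integral_nonneg_AE AE_I2) auto
    moreover have "(\<integral>x. (1 + (norm x)\<^sup>2) * \<bar>gs n x - g x\<bar> \<partial>lborel) < \<epsilon> + 2 * \<epsilon> + \<epsilon>"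
      using weighted_L1_dist_le[OF gs(1)[of n] gs(2,3) g(2,3) w(3)[unfolded w_def] L(1) refl]
        N[OF n] L(2) L(3)[of n] unfolding w_def by linarith
    ultimately show "norm ((\<integral>x. (1 + (norm x)\<^sup>2) * \<bar>gs n x - g x\<bar> \<partial>lborel) - 0) < r"
      using r by (simp add: \<epsilon>_def)
  qed
qed

lemma integral_open_indicator_minus_cutoff_tendsto_0:
  fixes P :: "'a::euclidean_space measure"
  assumes P: "prob_space P" and sP: "sets P = sets borel" and V: "open V" "V \<noteq> UNIV"
  shows "(\<lambda>k. \<integral>x. indicator V x - min 1 (real k * infdist x (- V)) \<partial>P) \<longlonglongrightarrow> 0"
proof -
  interpret prob_space P by fact
  have cutoff_m: "(\<lambda>x. min 1 (real k * infdist x (- V))) \<in> borel_measurable P" for k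
    using borel_measurable_continuous_onI[of "\<lambda>x. min 1 (real k * infdist x (- V))"]
    by (simp add: measurable_cong_sets[OF sP refl] continuous_intros)
  have "(\<lambda>k. \<integral>x. indicator V x - min 1 (real k * infdist x (- V)) \<partial>P) \<longlonglongrightarrow> (\<integral>x. 0 \<partial>P)"
  proof (rule integral_dominated_convergence[where w="\<lambda>x. 1"])
    show "(\<lambda>x. indicator V x - min 1 (real k * infdist x (- V))) \<in> borel_measurable P" for k
      using cutoff_m V sP by (intro borel_measurable_diff borel_measurable_indicator) auto
    show "AE x in P. (\<lambda>k. indicator V x - min 1 (real k * infdist x (- V))) \<longlonglongrightarrow> 0"
    proof (rule AE_I2)
      fix x show "(\<lambda>k. indicator V x - min 1 (real k * infdist x (- V))) \<longlonglongrightarrow> 0"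
      proof (cases "x \<in> V")
        case True
        have pos: "0 < infdist x (- V)"
          using infdist_pos_not_in_closed[of "- V" x] V True by auto
        have "\<forall>\<^sub>F k in sequentially. 1 / infdist x (- V) \<le> real k"
          by (rule eventually_sequentiallyI[of "nat \<lceil>1 / infdist x (- V)\<rceil>"]) linarith
        then have "\<forall>\<^sub>F k in sequentially. indicator V x - min 1 (real k * infdist x (- V)) = 0"
          by eventually_elim (use True pos in \<open>simp add: divide_le_eq\<close>)
        then show ?thesis by (rule tendsto_eventually)
      qed simp
    qed
    show "AE x in P. norm (indicator V x - min 1 (real k * infdist x (- V))) \<le> 1" for k
      by (intro AE_I2) (auto simp: indicator_def infdist_nonneg)
  qed auto
  then show ?thesis by simp
qed

lemma measure_Int_le_integral_cutoff:
  fixes P :: "'a::euclidean_space measure" and \<phi> :: "'a \<Rightarrow> real"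
  assumes P: "prob_space P" and sP: "sets P = sets borel" and V: "open V" and S: "S \<in> sets borel"
    and \<phi>: "continuous_on UNIV \<phi>" "\<And>x. 0 \<le> \<phi> x \<and> \<phi> x \<le> 1" "\<And>x. x \<notin> V \<Longrightarrow> \<phi> x = 0"
  shows "measure P (V \<inter> S) \<le> (\<integral>x. \<phi> x * indicator S x \<partial>P) + (\<integral>x. indicator V x - \<phi> x \<partial>P)"
proof -
  interpret prob_space P by fact
  have i\<phi>: "integrable P \<phi>"
    using \<phi>(2) borel_measurable_continuous_onI[OF \<phi>(1)]
    by (intro integrable_const_bound[where B=1]) (auto simp: measurable_cong_sets[OF sP refl])
  have iV: "integrable P (indicator V :: 'a \<Rightarrow> real)"
    using V sP by (intro integrable_const_bound[where B=1] borel_measurable_indicator)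
      (auto simp: indicator_def)
  have iS: "integrable P (\<lambda>x. \<phi> x * indicator S x)"
    using i\<phi> integrable_mult_indicator[of S P \<phi>] S sP by (simp add: mult.commute)
  have "measure P (V \<inter> S) = (\<integral>x. indicator (V \<inter> S) x \<partial>P)"
    using V S sP by (simp add: sets.Int_space_eq2)
  also have "\<dots> \<le> (\<integral>x. \<phi> x * indicator S x + (indicator V x - \<phi> x) \<partial>P)"
  proof (rule integral_mono')
    show "integrable P (\<lambda>x. \<phi> x * indicator S x + (indicator V x - \<phi> x))"
      using iS iV i\<phi> by auto
    fix x
    show "indicator (V \<inter> S) x \<le> \<phi> x * indicator S x + (indicator V x - \<phi> x)"
      "0 \<le> \<phi> x * indicator S x + (indicator V x - \<phi> x)"
      using \<phi>(2)[of x] \<phi>(3)[of x] by (auto simp: indicator_def)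
  qed
  also have "\<dots> = (\<integral>x. \<phi> x * indicator S x \<partial>P) + (\<integral>x. indicator V x - \<phi> x \<partial>P)"
    using iS iV i\<phi> by (simp add: Bochner_Integration.integral_add)
  finally show ?thesis .
qed

lemma measure_Int_open_tendsto_0:
  fixes P :: "'a::euclidean_space measure" and S :: "nat \<Rightarrow> 'a set"
  assumes P: "prob_space P" and sP: "sets P = sets borel"
    and V: "open V" and S: "\<And>n. S n \<in> sets borel"
    and test: "\<And>\<phi> :: 'a \<Rightarrow> real. continuous_on UNIV \<phi> \<Longrightarrow> (\<forall>x. 0 \<le> \<phi> x \<and> \<phi> x \<le> 1) \<Longrightarrow>
      (\<forall>x. x \<notin> V \<longrightarrow> \<phi> x = 0) \<Longrightarrow> (\<lambda>n. \<integral>x. \<phi> x * indicator (S n) x \<partial>P) \<longlonglongrightarrow> 0"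
  shows "(\<lambda>n. measure P (V \<inter> S n)) \<longlonglongrightarrow> 0"
proof (cases "V = UNIV")
  case True
  interpret prob_space P by fact
  have "measure P (V \<inter> S n) = (\<integral>x. 1 * indicator (S n) x \<partial>P)" for n
    using True S sP by simp
  then show ?thesis using test[of "\<lambda>x. 1"] True by simp
next
  case False
  define \<phi> where "\<phi> k x = min 1 (real k * infdist x (- V))" for k :: nat and x
  have \<phi>: "continuous_on UNIV (\<phi> k)" "\<And>x. 0 \<le> \<phi> k x \<and> \<phi> k x \<le> 1" "\<And>x. x \<notin> V \<Longrightarrow> \<phi> k x = 0"
    for k
    unfolding \<phi>_def by (auto intro!: continuous_intros simp: infdist_nonneg)
  show ?thesis
  proof (rule LIMSEQ_I)
    fix r :: real assume r: "0 < r"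
    from integral_open_indicator_minus_cutoff_tendsto_0[OF P sP V False] r obtain k
      where k: "(\<integral>x. indicator V x - \<phi> k x \<partial>P) < r / 2"
      by (auto dest!: order_tendstoD(2)[where a="r/2"] simp: eventually_sequentially \<phi>_def)
        (meson order_refl)
    have "(\<lambda>n. \<integral>x. \<phi> k x * indicator (S n) x \<partial>P) \<longlonglongrightarrow> 0"
      using \<phi>(2,3) by (intro test[OF \<phi>(1)]) auto
    from order_tendstoD(2)[OF this, of "r / 2"] r obtain N
      where N: "\<And>n. N \<le> n \<Longrightarrow> (\<integral>x. \<phi> k x * indicator (S n) x \<partial>P) < r / 2"
      by (auto simp: eventually_sequentially)
    show "\<exists>N. \<forall>n\<ge>N. norm (measure P (V \<inter> S n) - 0) < r"
    proof (intro exI allI impI)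
      fix n assume "N \<le> n"
      have "measure P (V \<inter> S n)
          \<le> (\<integral>x. \<phi> k x * indicator (S n) x \<partial>P) + (\<integral>x. indicator V x - \<phi> k x \<partial>P)"
        by (rule measure_Int_le_integral_cutoff[OF P sP V S \<phi>(1)]) (use \<phi>(2,3) in auto)
      then show "norm (measure P (V \<inter> S n) - 0) < r"
        using N[OF \<open>N \<le> n\<close>] k measure_nonneg[of P "V \<inter> S n"] by simp
    qed
  qed
qed

lemma measure_symdiff_le_interior_exterior:
  fixes P :: "'a::euclidean_space measure"
  assumes P: "prob_space P" and sP: "sets P = sets borel" and S: "S \<in> sets borel"
    and frontier: "measure P (frontier B) = 0"
  shows "measure P ((S - B) \<union> (B - S)) \<le> measure P (interior B \<inter> - S) + measure P (- closure B \<inter> S)"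
proof -
  interpret prob_space P by fact
  have "interior B \<in> sets borel" "closure B \<in> sets borel" "frontier B \<in> sets borel"
    by (simp_all add: borel_open borel_closed)
  then have sets: "interior B \<inter> - S \<in> sets P" "- closure B \<inter> S \<in> sets P" "frontier B \<in> sets P"
    using S unfolding sP by auto
  have "(S - B) \<union> (B - S) \<subseteq> ((interior B \<inter> - S) \<union> (- closure B \<inter> S)) \<union> frontier B"
    unfolding frontier_def using closure_subset[of B] interior_subset[of B] by blast
  then have "measure P ((S - B) \<union> (B - S)) \<le> measure P (((interior B \<inter> - S) \<union> (- closure B \<inter> S)) \<union> frontier B)"
    using sets by (intro finite_measure_mono) auto
  also have "\<dots> \<le> measure P ((interior B \<inter> - S) \<union> (- closure B \<inter> S)) + measure P (frontier B)"
    using sets by (intro measure_Un_le) auto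
  also have "\<dots> \<le> measure P (interior B \<inter> - S) + measure P (- closure B \<inter> S)"
    using sets frontier measure_Un_le[of "interior B \<inter> - S" P "- closure B \<inter> S"] by simp
  finally show ?thesis .
qed

text \<open>Test functions supported in the interior and in the exterior of \<open>B\<close> control the symmetric
  difference off the frontier of \<open>B\<close>, which is null because \<open>B\<close> is convex.\<close>

lemma measure_symdiff_tendsto_0_of_convex:
  fixes P :: "'a::euclidean_space measure" and Bs :: "nat \<Rightarrow> 'a set"
  assumes P: "prob_space P" and sP: "sets P = sets borel"
    and ac: "\<And>N. N \<in> null_sets lborel \<Longrightarrow> emeasure P N = 0"
    and Bs: "\<And>n. Bs n \<in> sets borel" and B: "convex B"
    and test: "\<And>\<phi> :: 'a \<Rightarrow> real. continuous_on UNIV \<phi> \<Longrightarrow> bounded (range \<phi>) \<Longrightarrow>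
      (\<lambda>n. \<integral>x. \<phi> x * indicator (Bs n) x \<partial>P) \<longlonglongrightarrow> (\<integral>x. \<phi> x * indicator B x \<partial>P)"
  shows "(\<lambda>n. measure P ((Bs n - B) \<union> (B - Bs n))) \<longlonglongrightarrow> 0"
proof -
  interpret prob_space P by fact
  define U where "U = interior B"
  define F where "F = - closure B"
  have U: "open U" "U \<subseteq> B" unfolding U_def by (auto simp: interior_subset)
  have F: "open F" "F \<inter> B = {}" unfolding F_def using closure_subset by auto
  have bnd: "bounded (range \<phi>)" if "\<forall>x. 0 \<le> \<phi> x \<and> \<phi> x \<le> (1::real)" for \<phi> :: "'a \<Rightarrow> real"
    using that by (intro boundedI[where B=1]) auto
  have interior: "(\<lambda>n. measure P (U \<inter> - Bs n)) \<longlonglongrightarrow> 0"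
  proof (rule measure_Int_open_tendsto_0[OF P sP U(1)])
    show "- Bs n \<in> sets borel" for n using Bs by auto
    fix \<phi> :: "'a \<Rightarrow> real" assume c: "continuous_on UNIV \<phi>" and b: "\<forall>x. 0 \<le> \<phi> x \<and> \<phi> x \<le> 1"
      and z: "\<forall>x. x \<notin> U \<longrightarrow> \<phi> x = 0"
    have i\<phi>: "integrable P \<phi>"
      using b borel_measurable_continuous_onI[OF c]
      by (intro integrable_const_bound[where B=1]) (auto simp: measurable_cong_sets[OF sP refl])
    have "(\<integral>x. \<phi> x * indicator (- Bs n) x \<partial>P) = (\<integral>x. \<phi> x * indicator B x \<partial>P) - (\<integral>x. \<phi> x * indicator (Bs n) x \<partial>P)"
      for n
    proof -
      have "(\<integral>x. \<phi> x * indicator (- Bs n) x \<partial>P) = (\<integral>x. \<phi> x - \<phi> x * indicator (Bs n) x \<partial>P)"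
        by (intro Bochner_Integration.integral_cong) (auto simp: indicator_def)
      also have "\<dots> = (\<integral>x. \<phi> x \<partial>P) - (\<integral>x. \<phi> x * indicator (Bs n) x \<partial>P)"
        using i\<phi> integrable_mult_indicator[of "Bs n" P \<phi>] Bs sP by (simp add: mult.commute)
      also have "(\<integral>x. \<phi> x \<partial>P) = (\<integral>x. \<phi> x * indicator B x \<partial>P)"
        using z U(2) by (intro Bochner_Integration.integral_cong) (auto simp: indicator_def)
      finally show ?thesis .
    qed
    moreover have "(\<lambda>n. (\<integral>x. \<phi> x * indicator B x \<partial>P) - (\<integral>x. \<phi> x * indicator (Bs n) x \<partial>P))
        \<longlonglongrightarrow> (\<integral>x. \<phi> x * indicator B x \<partial>P) - (\<integral>x. \<phi> x * indicator B x \<partial>P)"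
      by (intro tendsto_diff tendsto_const test[OF c bnd[OF b]])
    ultimately show "(\<lambda>n. \<integral>x. \<phi> x * indicator (- Bs n) x \<partial>P) \<longlonglongrightarrow> 0"
      by simp
  qed
  have exterior: "(\<lambda>n. measure P (F \<inter> Bs n)) \<longlonglongrightarrow> 0"
  proof (rule measure_Int_open_tendsto_0[OF P sP F(1) Bs])
    fix \<phi> :: "'a \<Rightarrow> real" assume c: "continuous_on UNIV \<phi>" and b: "\<forall>x. 0 \<le> \<phi> x \<and> \<phi> x \<le> 1"
      and z: "\<forall>x. x \<notin> F \<longrightarrow> \<phi> x = 0"
    have "(\<integral>x. \<phi> x * indicator B x \<partial>P) = 0"
      using z F(2) by (subst Bochner_Integration.integral_cong[where g="\<lambda>x. 0"])
        (auto simp: indicator_def)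
    then show "(\<lambda>n. \<integral>x. \<phi> x * indicator (Bs n) x \<partial>P) \<longlonglongrightarrow> 0"
      using test[OF c bnd[OF b]] by simp
  qed
  have "frontier B \<in> null_sets lborel"
    using negligible_convex_frontier[OF B]
    by (auto simp: null_sets_completion_iff negligible_iff_null_sets)
  then have "measure P (frontier B) = 0" using ac by (simp add: measure_def)
  note le = measure_symdiff_le_interior_exterior[OF P sP Bs this, folded U_def F_def]
  show ?thesis
  proof (rule tendsto_sandwich[OF _ _ tendsto_const])
    show "(\<lambda>n. measure P (U \<inter> - Bs n) + measure P (F \<inter> Bs n)) \<longlonglongrightarrow> 0"
      using tendsto_add[OF interior exterior] by simp
    show "\<forall>\<^sub>F n in sequentially. measure P ((Bs n - B) \<union> (B - Bs n))
        \<le> measure P (U \<inter> - Bs n) + measure P (F \<inter> Bs n)"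
      using le by simp
  qed simp
qed

lemma continuous_on_cell_test:
  fixes \<phi> :: "'a::topological_space \<Rightarrow> real"
  assumes "continuous_on UNIV \<phi>"
  shows "continuous_on UNIV (\<lambda>z::'a \<times> nat. \<phi> (fst z) * (if snd z = i then 1 else 0))"
proof -
  have "continuous_on UNIV (\<lambda>z::'a \<times> nat. \<phi> (fst z))"
    using continuous_on_compose[OF continuous_on_fst[OF continuous_on_id] assms[THEN continuous_on_subset]]
    by (simp add: o_def)
  moreover have "continuous_on UNIV ((\<lambda>j::nat. (if j = i then 1 else 0) :: real) \<circ> snd)"
    by (intro continuous_on_compose continuous_on_snd continuous_on_id
      Topological_Spaces.continuous_on_discrete)
  then have "continuous_on UNIV (\<lambda>z::'a \<times> nat. (if snd z = i then 1 else 0) :: real)"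
    by (simp add: o_def)
  ultimately show ?thesis by (rule continuous_on_mult)
qed

lemma integral_PQ_cell:
  fixes P :: "'a::euclidean_space measure" and Q :: "'a \<Rightarrow> nat" and \<phi> :: "'a \<Rightarrow> real"
  assumes sP: "sets P = sets borel" and Q: "Q \<in> borel_measurable borel" and \<phi>: "continuous_on UNIV \<phi>"
  shows "(\<integral>z. \<phi> (fst z) * (if snd z = i then 1 else 0) \<partial>PQ P Q) = (\<integral>x. \<phi> x * indicator (Q -` {i}) x \<partial>P)"
proof -
  have "(\<lambda>x. (x, Q x)) \<in> measurable P (borel \<Otimes>\<^sub>M borel)"
    using Q by (intro measurable_Pair) (auto simp: measurable_cong_sets[OF sP refl])
  then have "(\<lambda>x. (x, Q x)) \<in> measurable P borel" by (simp add: borel_prod)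
  then show ?thesis unfolding PQ_def
    using borel_measurable_continuous_onI[OF continuous_on_cell_test[OF \<phi>, of i]]
    by (subst integral_distr) (auto intro!: Bochner_Integration.integral_cong simp: indicator_def)
qed

lemma Q_conv_cell_integral_tendsto:
  fixes P :: "'a::euclidean_space measure" and \<phi> :: "'a \<Rightarrow> real"
  assumes conv: "Q_conv P Qs Q" and sP: "sets P = sets borel"
    and Qs: "\<And>n. Qs n \<in> borel_measurable borel" and Q: "Q \<in> borel_measurable borel"
    and \<phi>: "continuous_on UNIV \<phi>" "bounded (range \<phi>)"
  shows "(\<lambda>n. \<integral>x. \<phi> x * indicator (Qs n -` {i}) x \<partial>P) \<longlonglongrightarrow> (\<integral>x. \<phi> x * indicator (Q -` {i}) x \<partial>P)"
proof -
  from \<phi>(2) obtain K where K: "\<And>x. norm (\<phi> x) \<le> K" by (auto simp: bounded_iff)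
  have "bounded (range (\<lambda>z::'a \<times> nat. \<phi> (fst z) * (if snd z = i then 1 else 0)))"
    using K order_trans[OF norm_ge_zero K] by (intro boundedI[where B=K]) auto
  then have "(\<lambda>n. \<integral>z. \<phi> (fst z) * (if snd z = i then 1 else 0) \<partial>PQ P (Qs n))
      \<longlonglongrightarrow> (\<integral>z. \<phi> (fst z) * (if snd z = i then 1 else 0) \<partial>PQ P Q)"
    using conv continuous_on_cell_test[OF \<phi>(1)] unfolding Q_conv_def weak_conv_def by blast
  then show ?thesis
    unfolding integral_PQ_cell[OF sP Q \<phi>(1)] integral_PQ_cell[OF sP Qs \<phi>(1)] .
qed

lemma in_Qc_cell_sets:
  assumes "in_Qc M Q"
  shows "Q -` {i} \<in> sets borel"
proof -
  have "Q \<in> borel_measurable borel" using assms by (simp add: in_Qc_def)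
  then show ?thesis by (simp add: measurable_sets_borel)
qed

lemma Q_conv_cell_symdiff_tendsto_0:
  fixes P :: "'a::euclidean_space measure"
  assumes P: "pos_density_prob P" and Qs: "\<And>n. in_Qc M (Qs n)" and Q: "in_Qc M Q"
    and conv: "Q_conv P Qs Q"
  shows "(\<lambda>n. measure P ((Qs n -` {i} - Q -` {i}) \<union> (Q -` {i} - Qs n -` {i}))) \<longlonglongrightarrow> 0"
proof (rule measure_symdiff_tendsto_0_of_convex)
  obtain p where p: "p \<in> borel_measurable borel" and P_eq: "P = density lborel (\<lambda>x. ennreal (p x))"
    using pos_density_prob_obtain_density[OF P] by blast
  show "prob_space P" using P by (simp add: pos_density_prob_def)
  show sP: "sets P = sets borel" using P_eq by simp
  show "emeasure P N = 0" if "N \<in> null_sets lborel" for N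
    using that p unfolding P_eq
    by (subst emeasure_density) (auto intro: nn_integral_null_set simp: null_sets_def)
  show "Qs n -` {i} \<in> sets borel" for n
    using in_Qc_cell_sets Qs by blast
  show "convex (Q -` {i})"
  proof (cases "i \<in> {1..M}")
    case False
    then have "Q -` {i} = {}" using Q by (auto simp: in_Qc_def)
    then show ?thesis by simp
  qed (use Q in \<open>simp add: in_Qc_def\<close>)
  show "(\<lambda>n. \<integral>x. \<phi> x * indicator (Qs n -` {i}) x \<partial>P) \<longlonglongrightarrow> (\<integral>x. \<phi> x * indicator (Q -` {i}) x \<partial>P)"
    if "continuous_on UNIV \<phi>" "bounded (range \<phi>)" for \<phi> :: "'a \<Rightarrow> real"
    using Q_conv_cell_integral_tendsto[OF conv sP _ _ that] Qs Q by (simp add: in_Qc_def)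
qed

lemma integral_superlevel_tendsto_0:
  fixes p w :: "'a::euclidean_space \<Rightarrow> real"
  assumes p: "p \<in> borel_measurable borel" "\<And>x. 0 < p x"
    and w: "w \<in> borel_measurable borel" "\<And>x. 0 \<le> w x" "integrable lborel w"
  shows "(\<lambda>k. \<integral>x. indicator {x. real k * p x < w x} x * w x \<partial>lborel) \<longlonglongrightarrow> 0"
proof -
  have "(\<lambda>k. \<integral>x. indicator {x. real k * p x < w x} x * w x \<partial>lborel) \<longlonglongrightarrow> (\<integral>x. 0 \<partial>(lborel :: 'a measure))"
  proof (rule integral_dominated_convergence[where w=w])
    show "AE x in lborel. (\<lambda>k. indicator {x. real k * p x < w x} x * w x) \<longlonglongrightarrow> 0"
    proof (rule AE_I2, rule tendsto_eventually)
      fix x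
      have "\<forall>\<^sub>F k in sequentially. w x / p x \<le> real k"
        by (rule eventually_sequentiallyI[of "nat \<lceil>w x / p x\<rceil>"]) linarith
      then show "\<forall>\<^sub>F k in sequentially. indicator {x. real k * p x < w x} x * w x = 0"
        by eventually_elim (use p(2)[of x] in \<open>simp add: divide_le_eq\<close>)
    qed
    show "AE x in lborel. norm (indicator {x. real k * p x < w x} x * w x) \<le> w x" for k
      using w(2) by (intro AE_I2) (auto simp: indicator_def)
  qed (use p w in auto)
  then show ?thesis by simp
qed

text \<open>Off the set where \<open>w > k p\<close>, which carries little \<open>w\<close>-mass for large \<open>k\<close>, the
  \<open>w\<close>-mass is at most \<open>k\<close> times the \<open>p\<close>-mass.\<close>

lemma integral_indicator_tendsto_0_of_abs_cont:
  fixes p w :: "'a::euclidean_space \<Rightarrow> real" and A :: "nat \<Rightarrow> 'a set"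
  assumes p: "p \<in> borel_measurable borel" "\<And>x. 0 < p x" "integrable lborel p"
    and w: "w \<in> borel_measurable borel" "\<And>x. 0 \<le> w x" "integrable lborel w"
    and A: "\<And>n. A n \<in> sets borel"
    and lim: "(\<lambda>n. measure (density lborel (\<lambda>x. ennreal (p x))) (A n)) \<longlonglongrightarrow> 0"
  shows "(\<lambda>n. \<integral>x. indicator (A n) x * w x \<partial>lborel) \<longlonglongrightarrow> 0"
proof (rule LIMSEQ_I)
  fix r :: real assume r: "0 < r"
  define E where "E k = {x. real k * p x < w x}" for k :: nat
  have E: "E k \<in> sets borel" for k unfolding E_def using p w by measurable
  have "\<forall>\<^sub>F k in sequentially. (\<integral>x. indicator (E k) x * w x \<partial>lborel) < r / 2"
    using order_tendstoD(2)[OF integral_superlevel_tendsto_0[OF p(1,2) w], of "r / 2"] r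
    by (simp add: E_def)
  then obtain k where k: "(\<integral>x. indicator (E k) x * w x \<partial>lborel) < r / 2"
    unfolding eventually_sequentially by blast
  have lim': "(\<lambda>n. \<integral>x. indicator (A n) x * p x \<partial>lborel) \<longlonglongrightarrow> 0"
    using lim p A by (simp add: measure_density_eq_integral less_imp_le)
  from order_tendstoD(2)[OF tendsto_mult_right_zero[OF lim', of "real k + 1"], of "r / 2"] r
  obtain N where N: "\<And>n. N \<le> n \<Longrightarrow> (real k + 1) * (\<integral>x. indicator (A n) x * p x \<partial>lborel) < r / 2"
    by (auto simp: eventually_sequentially)
  show "\<exists>N. \<forall>n\<ge>N. norm ((\<integral>x. indicator (A n) x * w x \<partial>lborel) - 0) < r"
  proof (intro exI allI impI)
    fix n assume "N \<le> n"
    have iAp: "integrable lborel (\<lambda>x. indicator (A n) x * p x)"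
      using integrable_mult_indicator[of "A n" lborel p] A p by simp
    have iEw: "integrable lborel (\<lambda>x. indicator (E k) x * w x)"
      using integrable_mult_indicator[of "E k" lborel w] E w by simp
    have Ap: "0 \<le> (\<integral>x. indicator (A n) x * p x \<partial>lborel)"
      using p(2) by (intro integral_nonneg_AE AE_I2) (simp add: less_imp_le)
    have "(\<integral>x. indicator (A n) x * w x \<partial>lborel)
        \<le> (\<integral>x. real k * (indicator (A n) x * p x) + indicator (E k) x * w x \<partial>lborel)"
    proof (rule integral_mono')
      fix x
      show "indicator (A n) x * w x \<le> real k * (indicator (A n) x * p x) + indicator (E k) x * w x"
        "0 \<le> real k * (indicator (A n) x * p x) + indicator (E k) x * w x"
        using p(2)[of x] w(2)[of x] by (auto simp: indicator_def E_def)
    qed (use iAp iEw in auto)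
    also have "\<dots> = real k * (\<integral>x. indicator (A n) x * p x \<partial>lborel) + (\<integral>x. indicator (E k) x * w x \<partial>lborel)"
      using iAp iEw by simp
    also have "\<dots> < r"
    proof -
      have "real k * (\<integral>x. indicator (A n) x * p x \<partial>lborel)
          \<le> (real k + 1) * (\<integral>x. indicator (A n) x * p x \<partial>lborel)"
        using Ap by (intro mult_right_mono) auto
      then show ?thesis using N[OF \<open>N \<le> n\<close>] k by linarith
    qed
    finally have "(\<integral>x. indicator (A n) x * w x \<partial>lborel) < r" .
    moreover have "0 \<le> (\<integral>x. indicator (A n) x * w x \<partial>lborel)"
      using w(2) by (intro integral_nonneg_AE AE_I2) auto
    ultimately show "norm ((\<integral>x. indicator (A n) x * w x \<partial>lborel) - 0) < r" by simp
  qed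
qed

lemma integrable_weighted_abs_diff:
  fixes g h :: "'a::euclidean_space \<Rightarrow> real"
  assumes g: "g \<in> borel_measurable borel" "\<And>x. 0 \<le> g x" "integrable lborel (\<lambda>x. (1 + (norm x)\<^sup>2) * g x)"
    and h: "h \<in> borel_measurable borel" "\<And>x. 0 \<le> h x" "integrable lborel (\<lambda>x. (1 + (norm x)\<^sup>2) * h x)"
  shows "integrable lborel (\<lambda>x. (1 + (norm x)\<^sup>2) * \<bar>g x - h x\<bar>)"
proof (rule Bochner_Integration.integrable_bound[OF Bochner_Integration.integrable_add[OF g(3) h(3)]])
  show "(\<lambda>x. (1 + (norm x)\<^sup>2) * \<bar>g x - h x\<bar>) \<in> borel_measurable lborel"
    using g(1) h(1) by measurable
  show "AE x in lborel. norm ((1 + (norm x)\<^sup>2) * \<bar>g x - h x\<bar>)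
      \<le> norm ((1 + (norm x)\<^sup>2) * g x + (1 + (norm x)\<^sup>2) * h x)"
  proof (rule AE_I2)
    fix x
    have "(1 + (norm x)\<^sup>2) * \<bar>g x - h x\<bar> \<le> (1 + (norm x)\<^sup>2) * (g x + h x)"
      using g(2)[of x] h(2)[of x] by (intro mult_left_mono) auto
    then show "norm ((1 + (norm x)\<^sup>2) * \<bar>g x - h x\<bar>) \<le> norm ((1 + (norm x)\<^sup>2) * g x + (1 + (norm x)\<^sup>2) * h x)"
      using g(2)[of x] h(2)[of x] by (simp add: abs_mult distrib_left)
  qed
qed

lemma integrable_of_weighted_integrable:
  fixes h :: "'a::euclidean_space \<Rightarrow> real"
  assumes "h \<in> borel_measurable borel" "\<And>x. 0 \<le> h x" "integrable lborel (\<lambda>x. (1 + (norm x)\<^sup>2) * h x)"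
  shows "integrable lborel h"
proof (rule Bochner_Integration.integrable_bound[OF assms(3)])
  show "AE x in lborel. norm (h x) \<le> norm ((1 + (norm x)\<^sup>2) * h x)"
    using assms(2) by (intro AE_I2) (simp add: distrib_right)
qed (use assms(1) in simp)

lemma weighted_L1_indicator_tendsto_0:
  fixes p g :: "'a::euclidean_space \<Rightarrow> real" and gs :: "nat \<Rightarrow> 'a \<Rightarrow> real"
  assumes p: "p \<in> borel_measurable borel" "\<And>x. 0 < p x" "integrable lborel p"
    and gs: "\<And>n. gs n \<in> borel_measurable borel" "\<And>n x. 0 \<le> gs n x"
      "\<And>n. integrable lborel (\<lambda>x. (1 + (norm x)\<^sup>2) * gs n x)"
    and g: "g \<in> borel_measurable borel" "\<And>x. 0 \<le> g x" "integrable lborel (\<lambda>x. (1 + (norm x)\<^sup>2) * g x)"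
    and Bs: "\<And>n. Bs n \<in> sets borel" and B: "B \<in> sets borel"
    and W: "(\<lambda>n. \<integral>x. (1 + (norm x)\<^sup>2) * \<bar>gs n x - g x\<bar> \<partial>lborel) \<longlonglongrightarrow> 0"
    and symdiff: "(\<lambda>n. measure (density lborel (\<lambda>x. ennreal (p x))) ((Bs n - B) \<union> (B - Bs n))) \<longlonglongrightarrow> 0"
  shows "(\<lambda>n. \<integral>x. (1 + (norm x)\<^sup>2) * \<bar>indicator (Bs n) x * gs n x - indicator B x * g x\<bar> \<partial>lborel)
    \<longlonglongrightarrow> 0"
proof -
  define \<Delta> where "\<Delta> n = (Bs n - B) \<union> (B - Bs n)" for n
  define w where "w x = (1 + (norm x)\<^sup>2) * g x" for x
  have \<Delta>: "\<Delta> n \<in> sets borel" for n unfolding \<Delta>_def using Bs B by auto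
  have w: "w \<in> borel_measurable borel" "\<And>x. 0 \<le> w x" "integrable lborel w"
    unfolding w_def using g by auto
  have i1: "integrable lborel (\<lambda>x. (1 + (norm x)\<^sup>2) * \<bar>gs n x - g x\<bar>)" for n
    using integrable_weighted_abs_diff[OF gs(1,2,3) g] .
  have i2: "integrable lborel (\<lambda>x. indicator (\<Delta> n) x * w x)" for n
    using integrable_mult_indicator[of "\<Delta> n" lborel w] \<Delta> w by simp
  have le: "(\<integral>x. (1 + (norm x)\<^sup>2) * \<bar>indicator (Bs n) x * gs n x - indicator B x * g x\<bar> \<partial>lborel)
      \<le> (\<integral>x. (1 + (norm x)\<^sup>2) * \<bar>gs n x - g x\<bar> \<partial>lborel) + (\<integral>x. indicator (\<Delta> n) x * w x \<partial>lborel)" for n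
  proof -
    have "(\<integral>x. (1 + (norm x)\<^sup>2) * \<bar>indicator (Bs n) x * gs n x - indicator B x * g x\<bar> \<partial>lborel)
        \<le> (\<integral>x. (1 + (norm x)\<^sup>2) * \<bar>gs n x - g x\<bar> + indicator (\<Delta> n) x * w x \<partial>lborel)"
    proof (rule integral_mono')
      fix x
      have "\<bar>indicator (Bs n) x * gs n x - indicator B x * g x\<bar> \<le> \<bar>gs n x - g x\<bar> + indicator (\<Delta> n) x * g x"
        using gs(2)[of n x] g(2)[of x] by (auto simp: indicator_def \<Delta>_def)
      then have "(1 + (norm x)\<^sup>2) * \<bar>indicator (Bs n) x * gs n x - indicator B x * g x\<bar>
          \<le> (1 + (norm x)\<^sup>2) * (\<bar>gs n x - g x\<bar> + indicator (\<Delta> n) x * g x)"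
        by (intro mult_left_mono) auto
      then show "(1 + (norm x)\<^sup>2) * \<bar>indicator (Bs n) x * gs n x - indicator B x * g x\<bar>
          \<le> (1 + (norm x)\<^sup>2) * \<bar>gs n x - g x\<bar> + indicator (\<Delta> n) x * w x"
        by (simp add: w_def algebra_simps)
      show "0 \<le> (1 + (norm x)\<^sup>2) * \<bar>gs n x - g x\<bar> + indicator (\<Delta> n) x * w x"
        using w(2)[of x] by simp
    qed (use i1 i2 in simp)
    also have "\<dots> = (\<integral>x. (1 + (norm x)\<^sup>2) * \<bar>gs n x - g x\<bar> \<partial>lborel) + (\<integral>x. indicator (\<Delta> n) x * w x \<partial>lborel)"
      using i1 i2 by simp
    finally show ?thesis .
  qed
  have "(\<lambda>n. \<integral>x. indicator (\<Delta> n) x * w x \<partial>lborel) \<longlonglongrightarrow> 0"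
    using integral_indicator_tendsto_0_of_abs_cont[OF p w \<Delta>] symdiff by (simp add: \<Delta>_def)
  then have lim: "(\<lambda>n. (\<integral>x. (1 + (norm x)\<^sup>2) * \<bar>gs n x - g x\<bar> \<partial>lborel)
      + (\<integral>x. indicator (\<Delta> n) x * w x \<partial>lborel)) \<longlonglongrightarrow> 0"
    using tendsto_add[OF W] by simp
  show ?thesis
  proof (rule tendsto_sandwich[OF _ _ tendsto_const lim])
    show "\<forall>\<^sub>F n in sequentially.
        0 \<le> (\<integral>x. (1 + (norm x)\<^sup>2) * \<bar>indicator (Bs n) x * gs n x - indicator B x * g x\<bar> \<partial>lborel)"
      by (intro always_eventually allI integral_nonneg_AE AE_I2) simp
  qed (use le in simp)
qed

lemma norm_diff_sq_le: "(norm (x - u))\<^sup>2 \<le> 2 * (1 + (norm u)\<^sup>2) * (1 + (norm x)\<^sup>2)"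
  for x u :: "'a::real_normed_vector"
proof -
  have "(norm (x - u))\<^sup>2 \<le> (norm x + norm u)\<^sup>2"
    using norm_triangle_ineq4[of x u] by (intro power_mono) auto
  also have "\<dots> \<le> 2 * (norm x)\<^sup>2 + 2 * (norm u)\<^sup>2"
    by (smt (verit) sum_squares_ge_zero power2_sum zero_le_power2 power2_diff)
  also have "\<dots> \<le> 2 * (1 + (norm u)\<^sup>2) * (1 + (norm x)\<^sup>2)"
    by (simp add: algebra_simps add_nonneg_nonneg)
  finally show ?thesis .
qed

lemma integrable_norm_diff_sq_mult:
  fixes h :: "'a::euclidean_space \<Rightarrow> real"
  assumes "h \<in> borel_measurable borel" "\<And>x. 0 \<le> h x" "integrable lborel (\<lambda>x. (1 + (norm x)\<^sup>2) * h x)"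
  shows "integrable lborel (\<lambda>x. (norm (x - u))\<^sup>2 * h x)"
proof (rule Bochner_Integration.integrable_bound[OF integrable_mult_right[OF assms(3), of "2 * (1 + (norm u)\<^sup>2)"]])
  show "(\<lambda>x. (norm (x - u))\<^sup>2 * h x) \<in> borel_measurable lborel" using assms(1) by measurable
  show "AE x in lborel. norm ((norm (x - u))\<^sup>2 * h x) \<le> norm (2 * (1 + (norm u)\<^sup>2) * ((1 + (norm x)\<^sup>2) * h x))"
  proof (rule AE_I2)
    fix x
    have "(norm (x - u))\<^sup>2 * h x \<le> 2 * (1 + (norm u)\<^sup>2) * (1 + (norm x)\<^sup>2) * h x"
      using assms(2)[of x] norm_diff_sq_le[of x u] by (intro mult_right_mono) auto
    then show "norm ((norm (x - u))\<^sup>2 * h x) \<le> norm (2 * (1 + (norm u)\<^sup>2) * ((1 + (norm x)\<^sup>2) * h x))"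
      using assms(2)[of x] by (simp add: abs_mult mult.assoc)
  qed
qed

lemma integral_norm_diff_sq_dist_le:
  fixes f g :: "'a::euclidean_space \<Rightarrow> real"
  assumes f: "f \<in> borel_measurable borel" "\<And>x. 0 \<le> f x" "integrable lborel (\<lambda>x. (1 + (norm x)\<^sup>2) * f x)"
    and g: "g \<in> borel_measurable borel" "\<And>x. 0 \<le> g x" "integrable lborel (\<lambda>x. (1 + (norm x)\<^sup>2) * g x)"
  shows "\<bar>(\<integral>x. (norm (x - u))\<^sup>2 * f x \<partial>lborel) - (\<integral>x. (norm (x - u))\<^sup>2 * g x \<partial>lborel)\<bar>
    \<le> 2 * (1 + (norm u)\<^sup>2) * (\<integral>x. (1 + (norm x)\<^sup>2) * \<bar>f x - g x\<bar> \<partial>lborel)"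
proof -
  have i: "integrable lborel (\<lambda>x. (norm (x - u))\<^sup>2 * f x - (norm (x - u))\<^sup>2 * g x)"
    using integrable_norm_diff_sq_mult[OF f] integrable_norm_diff_sq_mult[OF g] by simp
  have "\<bar>(\<integral>x. (norm (x - u))\<^sup>2 * f x \<partial>lborel) - (\<integral>x. (norm (x - u))\<^sup>2 * g x \<partial>lborel)\<bar>
      = \<bar>\<integral>x. (norm (x - u))\<^sup>2 * f x - (norm (x - u))\<^sup>2 * g x \<partial>lborel\<bar>"
    using integrable_norm_diff_sq_mult[OF f] integrable_norm_diff_sq_mult[OF g] by simp
  also have "\<dots> \<le> (\<integral>x. 2 * (1 + (norm u)\<^sup>2) * ((1 + (norm x)\<^sup>2) * \<bar>f x - g x\<bar>) \<partial>lborel)"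
  proof (rule integral_abs_bound_integral[OF i])
    show "integrable lborel (\<lambda>x. 2 * (1 + (norm u)\<^sup>2) * ((1 + (norm x)\<^sup>2) * \<bar>f x - g x\<bar>))"
      using integrable_weighted_abs_diff[OF f g] by simp
    fix x
    have "\<bar>(norm (x - u))\<^sup>2 * f x - (norm (x - u))\<^sup>2 * g x\<bar> = (norm (x - u))\<^sup>2 * \<bar>f x - g x\<bar>"
      by (simp add: right_diff_distrib[symmetric] abs_mult)
    also have "\<dots> \<le> 2 * (1 + (norm u)\<^sup>2) * (1 + (norm x)\<^sup>2) * \<bar>f x - g x\<bar>"
      using norm_diff_sq_le[of x u] by (intro mult_right_mono) auto
    finally show "\<bar>(norm (x - u))\<^sup>2 * f x - (norm (x - u))\<^sup>2 * g x\<bar>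
        \<le> 2 * (1 + (norm u)\<^sup>2) * ((1 + (norm x)\<^sup>2) * \<bar>f x - g x\<bar>)"
      by (simp add: mult.assoc)
  qed
  also have "\<dots> = 2 * (1 + (norm u)\<^sup>2) * (\<integral>x. (1 + (norm x)\<^sup>2) * \<bar>f x - g x\<bar> \<partial>lborel)"
    by simp
  finally show ?thesis .
qed

lemma le_coercive_sq:
  fixes c r s :: real
  assumes "0 < c" "0 \<le> s" "r + sqrt (s / c) \<le> t"
  shows "s \<le> c * (max 0 (t - r))\<^sup>2"
proof -
  have "(sqrt (s / c))\<^sup>2 \<le> (max 0 (t - r))\<^sup>2" using assms by (intro power_mono) auto
  then have "s / c \<le> (max 0 (t - r))\<^sup>2" using assms by (simp add: real_sqrt_pow2)
  then show ?thesis using assms(1) by (simp add: divide_le_eq mult.commute)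
qed

text \<open>The infima are approached on a fixed ball, by coercivity; on a ball the convergence is
  uniform.\<close>

lemma INF_ennreal_tendsto_of_coercive:
  fixes Fs :: "nat \<Rightarrow> 'a::real_normed_vector \<Rightarrow> real" and F :: "'a \<Rightarrow> real"
  assumes nonneg: "\<And>u. 0 \<le> F u"
    and pointwise: "\<And>u. (\<lambda>n. Fs n u) \<longlonglongrightarrow> F u"
    and uniform: "\<And>R \<delta>. 0 < \<delta> \<Longrightarrow> \<forall>\<^sub>F n in sequentially. \<forall>u. norm u \<le> R \<longrightarrow> F u - \<delta> \<le> Fs n u"
    and coercive: "(\<forall>u. F u = 0) \<or>
      (\<exists>c>0. \<exists>r. \<forall>\<^sub>F n in sequentially. \<forall>u. c * (max 0 (norm u - r))\<^sup>2 \<le> Fs n u)"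
  shows "(\<lambda>n. INF u. ennreal (Fs n u)) \<longlonglongrightarrow> (INF u. ennreal (F u))"
proof (rule order_tendstoI)
  fix y assume "(INF u. ennreal (F u)) < y"
  then obtain u where u: "ennreal (F u) < y" by (auto simp: INF_less_iff)
  from order_tendstoD(2)[OF tendsto_ennrealI[OF pointwise] u]
  show "\<forall>\<^sub>F n in sequentially. (INF u. ennreal (Fs n u)) < y"
    by eventually_elim (rule le_less_trans[OF INF_lower], auto)
next
  fix y assume y: "y < (INF u. ennreal (F u))"
  show "\<forall>\<^sub>F n in sequentially. y < (INF u. ennreal (Fs n u))"
  proof (cases "\<forall>u. F u = 0")
    case True then show ?thesis using y by simp
  next
    case False
    with coercive obtain c r where c: "0 < c"
      and ev: "\<forall>\<^sub>F n in sequentially. \<forall>u. c * (max 0 (norm u - r))\<^sup>2 \<le> Fs n u"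
      by auto
    have fin: "(INF u. ennreal (F u)) < \<top>"
      using INF_lower[of 0 UNIV "\<lambda>u. ennreal (F u)"] by (simp add: le_less_trans)
    obtain s1 s2 where s: "y < ennreal s1" "0 \<le> s1" "s1 < s2" "ennreal s2 < (INF u. ennreal (F u))"
    proof -
      obtain y1 where y1: "y < y1" "y1 < (INF u. ennreal (F u))" using y dense by blast
      obtain y2 where y2: "y1 < y2" "y2 < (INF u. ennreal (F u))" using y1 dense by blast
      obtain s2 where "y2 = ennreal s2" "0 \<le> s2" using y2 fin by (cases y2) auto
      moreover obtain s1 where "y1 = ennreal s1" "0 \<le> s1" using y1 y2 fin by (cases y1) auto
      ultimately show ?thesis using y1 y2 that[of s1 s2] by (simp add: ennreal_less_iff)
    qed
    have F_ge: "s2 \<le> F u" for u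
    proof -
      have "ennreal s2 \<le> ennreal (F u)"
        using s(4) INF_lower[of u UNIV "\<lambda>u. ennreal (F u)"] by simp
      then show ?thesis using nonneg[of u] by simp
    qed
    have "\<forall>\<^sub>F n in sequentially. \<forall>u. norm u \<le> r + sqrt (s2 / c) \<longrightarrow> F u - (s2 - s1) \<le> Fs n u"
      using s by (intro uniform) simp
    with ev show ?thesis
    proof eventually_elim
      case (elim n)
      have "s1 \<le> Fs n u" for u
      proof (cases "norm u \<le> r + sqrt (s2 / c)")
        case True then show ?thesis using elim(2) F_ge[of u] by force
      next
        case False
        then have "s2 \<le> c * (max 0 (norm u - r))\<^sup>2" using s by (intro le_coercive_sq[OF c]) auto
        then show ?thesis using elim(1)[rule_format, of u] s by linarith
      qed
      then have "ennreal s1 \<le> (INF u. ennreal (Fs n u))" by (auto intro!: INF_greatest ennreal_leI)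
      then show ?case using s(1) by simp
    qed
  qed
qed

lemma integral_cball_pos:
  fixes f :: "'a::euclidean_space \<Rightarrow> real"
  assumes f: "f \<in> borel_measurable borel" "\<And>x. 0 \<le> f x" "integrable lborel f" "0 < (\<integral>x. f x \<partial>lborel)"
  obtains r where "0 < (\<integral>x. indicator (cball 0 r) x * f x \<partial>lborel)"
proof -
  have "(\<lambda>k::nat. \<integral>x. indicator (cball 0 (real k)) x * f x \<partial>lborel) \<longlonglongrightarrow> (\<integral>x. f x \<partial>lborel)"
  proof (rule integral_dominated_convergence[where w=f])
    show "AE x in lborel. (\<lambda>k. indicator (cball 0 (real k)) x * f x) \<longlonglongrightarrow> f x"
    proof (rule AE_I2, rule tendsto_eventually)
      fix x :: 'a
      have "\<forall>\<^sub>F k in sequentially. norm x \<le> real k"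
        by (rule eventually_sequentiallyI[of "nat \<lceil>norm x\<rceil>"]) linarith
      then show "\<forall>\<^sub>F k in sequentially. indicator (cball 0 (real k)) x * f x = f x"
        by eventually_elim (simp add: indicator_def)
    qed
    show "AE x in lborel. norm (indicator (cball 0 (real k)) x * f x) \<le> f x" for k
      using f(2) by (intro AE_I2) (auto simp: indicator_def)
    show "(\<lambda>x. indicator (cball 0 (real k)) x * f x) \<in> borel_measurable lborel" for k
      using f(1) by (intro borel_measurable_times borel_measurable_indicator) auto
  qed (use f in auto)
  from order_tendstoD(1)[OF this f(4)] show ?thesis
    using that unfolding eventually_sequentially by blast
qed

lemma integral_norm_diff_sq_ge:
  fixes f :: "'a::euclidean_space \<Rightarrow> real"
  assumes f: "f \<in> borel_measurable borel" "\<And>x. 0 \<le> f x" "integrable lborel (\<lambda>x. (1 + (norm x)\<^sup>2) * f x)"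
  shows "(\<integral>x. indicator (cball 0 r) x * f x \<partial>lborel) * (max 0 (norm u - r))\<^sup>2
    \<le> (\<integral>x. (norm (x - u))\<^sup>2 * f x \<partial>lborel)"
proof -
  have "(\<integral>x. indicator (cball 0 r) x * f x \<partial>lborel) * (max 0 (norm u - r))\<^sup>2
      = (\<integral>x. (max 0 (norm u - r))\<^sup>2 * (indicator (cball 0 r) x * f x) \<partial>lborel)"
    by (simp add: mult.commute)
  also have "\<dots> \<le> (\<integral>x. (norm (x - u))\<^sup>2 * f x \<partial>lborel)"
  proof (rule integral_mono')
    fix x :: 'a
    show "(max 0 (norm u - r))\<^sup>2 * (indicator (cball 0 r) x * f x) \<le> (norm (x - u))\<^sup>2 * f x"
    proof (cases "x \<in> cball 0 r")
      case True
      have "norm u \<le> norm (x - u) + norm x"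
        using norm_triangle_ineq[of "u - x" x] by (simp add: norm_minus_commute)
      with True have "max 0 (norm u - r) \<le> norm (x - u)" by simp
      then have "(max 0 (norm u - r))\<^sup>2 \<le> (norm (x - u))\<^sup>2" by (intro power_mono) auto
      then show ?thesis using True f(2)[of x] by (simp add: mult_right_mono)
    qed (use f(2)[of x] in simp)
    show "0 \<le> (norm (x - u))\<^sup>2 * f x" using f(2)[of x] by simp
  qed (rule integrable_norm_diff_sq_mult[OF f])
  finally show ?thesis .
qed

lemma integral_indicator_dist_le_weighted_L1:
  fixes g h :: "'a::euclidean_space \<Rightarrow> real"
  assumes g: "g \<in> borel_measurable borel" "\<And>x. 0 \<le> g x" "integrable lborel (\<lambda>x. (1 + (norm x)\<^sup>2) * g x)"
    and h: "h \<in> borel_measurable borel" "\<And>x. 0 \<le> h x" "integrable lborel (\<lambda>x. (1 + (norm x)\<^sup>2) * h x)"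
    and A: "A \<in> sets borel"
  shows "\<bar>(\<integral>x. indicator A x * g x \<partial>lborel) - (\<integral>x. indicator A x * h x \<partial>lborel)\<bar>
    \<le> (\<integral>x. (1 + (norm x)\<^sup>2) * \<bar>g x - h x\<bar> \<partial>lborel)"
proof -
  have iA: "integrable lborel (\<lambda>x. indicator A x * g x)" "integrable lborel (\<lambda>x. indicator A x * h x)"
    using integrable_mult_indicator[of A lborel g] integrable_mult_indicator[of A lborel h] A
      integrable_of_weighted_integrable[OF g] integrable_of_weighted_integrable[OF h] by simp_all
  have "\<bar>(\<integral>x. indicator A x * g x \<partial>lborel) - (\<integral>x. indicator A x * h x \<partial>lborel)\<bar>
      = \<bar>\<integral>x. indicator A x * g x - indicator A x * h x \<partial>lborel\<bar>"
    using iA by simp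
  also have "\<dots> \<le> (\<integral>x. (1 + (norm x)\<^sup>2) * \<bar>g x - h x\<bar> \<partial>lborel)"
  proof (rule integral_abs_bound_integral[OF _ integrable_weighted_abs_diff[OF g h]])
    show "integrable lborel (\<lambda>x. indicator A x * g x - indicator A x * h x)" using iA by simp
    fix x
    have "\<bar>g x - h x\<bar> \<le> (1 + (norm x)\<^sup>2) * \<bar>g x - h x\<bar>" by (simp add: distrib_right)
    then show "\<bar>indicator A x * g x - indicator A x * h x\<bar> \<le> (1 + (norm x)\<^sup>2) * \<bar>g x - h x\<bar>"
      by (auto simp: indicator_def)
  qed
  finally show ?thesis .
qed

text \<open>A fixed ball carries mass of the limit, hence eventually a fixed fraction of it for all
  \<open>fs n\<close>, and all that mass is at distance at least \<open>\<parallel>u\<parallel> - r\<close> from \<open>u\<close>.\<close>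

lemma eventually_coercive_of_weighted_L1:
  fixes fs :: "nat \<Rightarrow> 'a::euclidean_space \<Rightarrow> real" and f :: "'a \<Rightarrow> real"
  assumes fs: "\<And>n. fs n \<in> borel_measurable borel" "\<And>n x. 0 \<le> fs n x"
      "\<And>n. integrable lborel (\<lambda>x. (1 + (norm x)\<^sup>2) * fs n x)"
    and f: "f \<in> borel_measurable borel" "\<And>x. 0 \<le> f x" "integrable lborel (\<lambda>x. (1 + (norm x)\<^sup>2) * f x)"
    and lim: "(\<lambda>n. \<integral>x. (1 + (norm x)\<^sup>2) * \<bar>fs n x - f x\<bar> \<partial>lborel) \<longlonglongrightarrow> 0"
    and pos: "0 < (\<integral>x. f x \<partial>lborel)"
  shows "\<exists>c>0. \<exists>r. \<forall>\<^sub>F n in sequentially. \<forall>u. c * (max 0 (norm u - r))\<^sup>2 \<le> (\<integral>x. (norm (x - u))\<^sup>2 * fs n x \<partial>lborel)"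
proof -
  obtain r where r: "0 < (\<integral>x. indicator (cball 0 r) x * f x \<partial>lborel)"
    using integral_cball_pos[OF f(1,2) integrable_of_weighted_integrable[OF f] pos] by blast
  define m where "m = (\<integral>x. indicator (cball 0 r) x * f x \<partial>lborel)"
  have m: "0 < m / 2" using r by (simp add: m_def)
  from order_tendstoD(2)[OF lim m]
  have "\<forall>\<^sub>F n in sequentially. \<forall>u. m / 2 * (max 0 (norm u - r))\<^sup>2 \<le> (\<integral>x. (norm (x - u))\<^sup>2 * fs n x \<partial>lborel)"
  proof eventually_elim
    case (elim n)
    show ?case
    proof
      fix u :: 'a
      have "m / 2 \<le> (\<integral>x. indicator (cball 0 r) x * fs n x \<partial>lborel)"
        using integral_indicator_dist_le_weighted_L1[OF fs(1,2,3) f, of "cball 0 r" n] elim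
        by (simp add: abs_le_iff m_def)
      then have "m / 2 * (max 0 (norm u - r))\<^sup>2
          \<le> (\<integral>x. indicator (cball 0 r) x * fs n x \<partial>lborel) * (max 0 (norm u - r))\<^sup>2"
        by (intro mult_right_mono) auto
      then show "m / 2 * (max 0 (norm u - r))\<^sup>2 \<le> (\<integral>x. (norm (x - u))\<^sup>2 * fs n x \<partial>lborel)"
        using integral_norm_diff_sq_ge[OF fs(1)[of n] fs(2) fs(3)[of n], where r=r and u=u] by linarith
    qed
  qed
  then show ?thesis using m by blast
qed

lemma INF_integral_norm_diff_sq_tendsto:
  fixes fs :: "nat \<Rightarrow> 'a::euclidean_space \<Rightarrow> real" and f :: "'a \<Rightarrow> real"
  assumes fs: "\<And>n. fs n \<in> borel_measurable borel" "\<And>n x. 0 \<le> fs n x"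
      "\<And>n. integrable lborel (\<lambda>x. (1 + (norm x)\<^sup>2) * fs n x)"
    and f: "f \<in> borel_measurable borel" "\<And>x. 0 \<le> f x" "integrable lborel (\<lambda>x. (1 + (norm x)\<^sup>2) * f x)"
    and lim: "(\<lambda>n. \<integral>x. (1 + (norm x)\<^sup>2) * \<bar>fs n x - f x\<bar> \<partial>lborel) \<longlonglongrightarrow> 0"
  shows "(\<lambda>n. INF u. ennreal (\<integral>x. (norm (x - u))\<^sup>2 * fs n x \<partial>lborel))
    \<longlonglongrightarrow> (INF u. ennreal (\<integral>x. (norm (x - u))\<^sup>2 * f x \<partial>lborel))"
proof (rule INF_ennreal_tendsto_of_coercive)
  define D where "D n = (\<integral>x. (1 + (norm x)\<^sup>2) * \<bar>fs n x - f x\<bar> \<partial>lborel)" for n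
  have dist_le: "\<bar>(\<integral>x. (norm (x - u))\<^sup>2 * fs n x \<partial>lborel) - (\<integral>x. (norm (x - u))\<^sup>2 * f x \<partial>lborel)\<bar>
      \<le> 2 * (1 + (norm u)\<^sup>2) * D n" for n u
    unfolding D_def by (rule integral_norm_diff_sq_dist_le[OF fs(1,2,3) f])
  have D0: "0 \<le> D n" for n unfolding D_def by (intro integral_nonneg_AE AE_I2) auto
  have D: "D \<longlonglongrightarrow> 0" using lim unfolding D_def .
  show "0 \<le> (\<integral>x. (norm (x - u))\<^sup>2 * f x \<partial>lborel)" for u
    using f(2) by (intro integral_nonneg_AE AE_I2) auto
  show "(\<lambda>n. \<integral>x. (norm (x - u))\<^sup>2 * fs n x \<partial>lborel) \<longlonglongrightarrow> (\<integral>x. (norm (x - u))\<^sup>2 * f x \<partial>lborel)" for u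
  proof (rule LIM_zero_cancel, rule Lim_null_comparison)
    show "\<forall>\<^sub>F n in sequentially. norm ((\<integral>x. (norm (x - u))\<^sup>2 * fs n x \<partial>lborel)
        - (\<integral>x. (norm (x - u))\<^sup>2 * f x \<partial>lborel)) \<le> 2 * (1 + (norm u)\<^sup>2) * D n"
      using dist_le by simp
  qed (rule tendsto_mult_right_zero[OF D])
  show "\<forall>\<^sub>F n in sequentially. \<forall>u. norm u \<le> R \<longrightarrow>
      (\<integral>x. (norm (x - u))\<^sup>2 * f x \<partial>lborel) - \<delta> \<le> (\<integral>x. (norm (x - u))\<^sup>2 * fs n x \<partial>lborel)"
    if "0 < \<delta>" for R \<delta>
    using order_tendstoD(2)[OF tendsto_mult_right_zero[OF D, of "2 * (1 + R\<^sup>2)"] that]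
  proof eventually_elim
    case (elim n)
    show ?case
    proof (intro allI impI)
      fix u :: 'a assume "norm u \<le> R"
      then have "(norm u)\<^sup>2 \<le> R\<^sup>2" by (intro power_mono) auto
      then have "2 * (1 + (norm u)\<^sup>2) * D n \<le> 2 * (1 + R\<^sup>2) * D n"
        using D0[of n] by (intro mult_right_mono) auto
      then show "(\<integral>x. (norm (x - u))\<^sup>2 * f x \<partial>lborel) - \<delta> \<le> (\<integral>x. (norm (x - u))\<^sup>2 * fs n x \<partial>lborel)"
        using dist_le[of u n] elim by (simp add: abs_le_iff)
    qed
  qed
  show "(\<forall>u. (\<integral>x. (norm (x - u))\<^sup>2 * f x \<partial>lborel) = 0) \<or>
    (\<exists>c>0. \<exists>r. \<forall>\<^sub>F n in sequentially. \<forall>u. c * (max 0 (norm u - r))\<^sup>2 \<le> (\<integral>x. (norm (x - u))\<^sup>2 * fs n x \<partial>lborel))"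
  proof (cases "(\<integral>x. f x \<partial>lborel) = 0")
    case True
    then have "AE x in lborel. f x = 0"
      using integral_nonneg_eq_0_iff_AE[OF integrable_of_weighted_integrable[OF f]] f(2) by auto
    then show ?thesis by (intro disjI1 allI integral_eq_zero_AE) auto
  next
    case False
    moreover have "0 \<le> (\<integral>x. f x \<partial>lborel)" using f(2) by (intro integral_nonneg_AE AE_I2) auto
    ultimately show ?thesis
      using eventually_coercive_of_weighted_L1[OF fs f lim] by simp
  qed
qed

lemma set_nn_integral_norm_diff_sq_density:
  fixes h :: "'a::euclidean_space \<Rightarrow> real"
  assumes "h \<in> borel_measurable borel" "\<And>x. 0 \<le> h x" "integrable lborel (\<lambda>x. (1 + (norm x)\<^sup>2) * h x)"
    and "A \<in> sets borel"
  shows "(\<integral>\<^sup>+x\<in>A. ennreal ((norm (x - u))\<^sup>2) \<partial>density lborel (\<lambda>x. ennreal (h x)))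
    = ennreal (\<integral>x. (norm (x - u))\<^sup>2 * (indicator A x * h x) \<partial>lborel)"
proof -
  have "(\<integral>\<^sup>+x\<in>A. ennreal ((norm (x - u))\<^sup>2) \<partial>density lborel (\<lambda>x. ennreal (h x)))
      = ennreal (\<integral>x. indicator A x * ((norm (x - u))\<^sup>2 * h x) \<partial>lborel)"
    using assms integrable_norm_diff_sq_mult[OF assms(1-3)] by (intro set_nn_integral_density_eq_integral) auto
  also have "(\<integral>x. indicator A x * ((norm (x - u))\<^sup>2 * h x) \<partial>lborel)
      = (\<integral>x. (norm (x - u))\<^sup>2 * (indicator A x * h x) \<partial>lborel)"
    by (simp add: mult.left_commute)
  finally show ?thesis .
qed

lemma cell_cost_tendsto:
  fixes gs :: "nat \<Rightarrow> 'a::euclidean_space \<Rightarrow> real" and g :: "'a \<Rightarrow> real"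
  assumes gs: "\<And>n. gs n \<in> borel_measurable borel" "\<And>n x. 0 \<le> gs n x"
      "\<And>n. integrable lborel (\<lambda>x. (1 + (norm x)\<^sup>2) * gs n x)"
    and g: "g \<in> borel_measurable borel" "\<And>x. 0 \<le> g x" "integrable lborel (\<lambda>x. (1 + (norm x)\<^sup>2) * g x)"
    and Bs: "\<And>n. Bs n \<in> sets borel" and B: "B \<in> sets borel"
    and lim: "(\<lambda>n. \<integral>x. (1 + (norm x)\<^sup>2) * \<bar>indicator (Bs n) x * gs n x - indicator B x * g x\<bar> \<partial>lborel)
      \<longlonglongrightarrow> 0"
  shows "(\<lambda>n. INF u. \<integral>\<^sup>+x\<in>Bs n. ennreal ((norm (x - u))\<^sup>2) \<partial>density lborel (\<lambda>x. ennreal (gs n x)))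
    \<longlonglongrightarrow> (INF u. \<integral>\<^sup>+x\<in>B. ennreal ((norm (x - u))\<^sup>2) \<partial>density lborel (\<lambda>x. ennreal (g x)))"
proof -
  have restrict: "integrable lborel (\<lambda>x. (1 + (norm x)\<^sup>2) * (indicator A x * h x))"
    if "integrable lborel (\<lambda>x. (1 + (norm x)\<^sup>2) * h x)" "A \<in> sets borel" for A and h :: "'a \<Rightarrow> real"
    using integrable_mult_indicator[of A lborel "\<lambda>x. (1 + (norm x)\<^sup>2) * h x"] that
    by (simp add: mult.left_commute)
  have "(\<integral>\<^sup>+x\<in>Bs n. ennreal ((norm (x - u))\<^sup>2) \<partial>density lborel (\<lambda>x. ennreal (gs n x)))
      = ennreal (\<integral>x. (norm (x - u))\<^sup>2 * (indicator (Bs n) x * gs n x) \<partial>lborel)" for n u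
    by (rule set_nn_integral_norm_diff_sq_density[OF gs(1) gs(2) gs(3) Bs])
  moreover have "(\<integral>\<^sup>+x\<in>B. ennreal ((norm (x - u))\<^sup>2) \<partial>density lborel (\<lambda>x. ennreal (g x)))
      = ennreal (\<integral>x. (norm (x - u))\<^sup>2 * (indicator B x * g x) \<partial>lborel)" for u
    by (rule set_nn_integral_norm_diff_sq_density[OF g B])
  moreover have "(\<lambda>x. indicator (Bs n) x * gs n x) \<in> borel_measurable borel" for n
    using gs(1) Bs by (intro borel_measurable_times borel_measurable_indicator) auto
  moreover have "(\<lambda>x. indicator B x * g x) \<in> borel_measurable borel"
    using g(1) B by (intro borel_measurable_times borel_measurable_indicator) auto
  ultimately show ?thesis
    using INF_integral_norm_diff_sq_tendsto[of "\<lambda>n x. indicator (Bs n) x * gs n x" "\<lambda>x. indicator B x * g x"]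
      restrict[OF gs(3) Bs] restrict[OF g(3) B] gs(2) g(2) lim
    by simp
qed

lemma weighted_L1_tendsto_0_of_tv_dist_UI:
  fixes gs :: "nat \<Rightarrow> 'a::euclidean_space \<Rightarrow> real" and g :: "'a \<Rightarrow> real"
  assumes gs: "\<And>n. prob_density (gs n)" and g: "prob_density g"
    and tv: "(\<lambda>n. tv_dist (density lborel (\<lambda>x. ennreal (gs n x))) (density lborel (\<lambda>x. ennreal (g x))))
      \<longlonglongrightarrow> 0"
    and UI: "((\<lambda>L::real. SUP n. \<integral>\<^sup>+x\<in>{x. L \<le> (norm x)\<^sup>2}. ennreal ((norm x)\<^sup>2)
      \<partial>density lborel (\<lambda>x. ennreal (gs n x))) \<longlongrightarrow> 0) at_top"
  shows "\<And>n. integrable lborel (\<lambda>x. (1 + (norm x)\<^sup>2) * gs n x)"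
    "integrable lborel (\<lambda>x. (1 + (norm x)\<^sup>2) * g x)"
    "(\<lambda>n. \<integral>x. (1 + (norm x)\<^sup>2) * \<bar>gs n x - g x\<bar> \<partial>lborel) \<longlonglongrightarrow> 0"
proof -
  from gs have gsm: "\<And>n. gs n \<in> borel_measurable borel" and gs0: "\<And>n x. 0 \<le> gs n x"
    and gsi: "\<And>n. integrable lborel (gs n)"
    by (auto simp: prob_density_def)
  from g have gm: "g \<in> borel_measurable borel" and g0: "\<And>x. 0 \<le> g x" and gi: "integrable lborel g"
    by (auto simp: prob_density_def)
  have L1: "(\<lambda>n. \<integral>x. \<bar>gs n x - g x\<bar> \<partial>lborel) \<longlonglongrightarrow> 0"
    by (rule L1_dist_tendsto_0_of_tv_dist[OF gs g tv])
  obtain S where mom: "\<And>n. integrable lborel (\<lambda>x. (norm x)\<^sup>2 * gs n x)"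
    "\<And>n. (\<integral>x. (norm x)\<^sup>2 * gs n x \<partial>lborel) \<le> S"
    using uniform_second_moment_of_UI[OF gs UI] by blast
  have mom_g: "integrable lborel (\<lambda>x. (norm x)\<^sup>2 * g x)"
    by (rule integrable_second_moment_of_L1_limit[OF gm g0 gi gs0 gsi mom L1])
  show "(\<lambda>n. \<integral>x. (1 + (norm x)\<^sup>2) * \<bar>gs n x - g x\<bar> \<partial>lborel) \<longlonglongrightarrow> 0"
    by (rule weighted_L1_tendsto_0[OF gm g0 gi mom_g gs0 gsi mom(1) L1
          second_moment_tails_of_UI[OF gsm gs0 mom(1) UI]])
  show "integrable lborel (\<lambda>x. (1 + (norm x)\<^sup>2) * gs n x)" for n
    using gsi mom(1) by (simp add: distrib_right)
  show "integrable lborel (\<lambda>x. (1 + (norm x)\<^sup>2) * g x)"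
    using gi mom_g by (simp add: distrib_right)
qed

theorem lemma7:
  fixes C C1 :: real and M :: nat
    and P \<pi> :: "'a::euclidean_space measure" and \<pi>s :: "nat \<Rightarrow> 'a measure"
    and Q :: "'a \<Rightarrow> nat" and Qs :: "nat \<Rightarrow> 'a \<Rightarrow> nat"
  assumes "pos_density_prob P"
    and "\<And>n. in_S C C1 (\<pi>s n)" and "in_S C C1 \<pi>"
    and "\<And>n. in_Qc M (Qs n)" and "in_Qc M Q"
    and "(\<lambda>n. tv_dist (\<pi>s n) \<pi>) \<longlonglongrightarrow> 0"
    and "Q_conv P Qs Q"
    and "((\<lambda>L::real. SUP n. \<integral>\<^sup>+x\<in>{x. L \<le> (norm x)\<^sup>2}. ennreal ((norm x)\<^sup>2) \<partial>\<pi>s n)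
            \<longlongrightarrow> 0) at_top"
  shows "(\<lambda>n. cost M (\<pi>s n) (Qs n)) \<longlonglongrightarrow> cost M \<pi> Q"
proof -
  obtain p where p: "p \<in> borel_measurable borel" "\<And>x. 0 < p x" "integrable lborel p"
    and P: "P = density lborel (\<lambda>x. ennreal (p x))"
    using pos_density_prob_obtain_density[OF assms(1)] by blast
  have "\<forall>n. \<exists>g. prob_density g \<and> \<pi>s n = density lborel (\<lambda>x. ennreal (g x))"
    using in_S_obtain_prob_density[OF assms(2)] by metis
  then obtain gs where gs: "\<And>n. prob_density (gs n)"
    and \<pi>s: "\<And>n. \<pi>s n = density lborel (\<lambda>x. ennreal (gs n x))"
    by metis
  obtain g where g: "prob_density g" and \<pi>: "\<pi> = density lborel (\<lambda>x. ennreal (g x))"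
    using in_S_obtain_prob_density[OF assms(3)] by blast
  note weighted = weighted_L1_tendsto_0_of_tv_dist_UI[OF gs g assms(6,8)[unfolded \<pi>s \<pi>]]
  from gs g have gsm: "\<And>n. gs n \<in> borel_measurable borel" "\<And>n x. 0 \<le> gs n x"
    and gm: "g \<in> borel_measurable borel" "\<And>x. 0 \<le> g x"
    by (auto simp: prob_density_def)
  note cells = in_Qc_cell_sets[OF assms(4)] in_Qc_cell_sets[OF assms(5)]
  have "(\<lambda>n. INF u. \<integral>\<^sup>+x\<in>Qs n -` {i}. ennreal ((norm (x - u))\<^sup>2) \<partial>\<pi>s n)
      \<longlonglongrightarrow> (INF u. \<integral>\<^sup>+x\<in>Q -` {i}. ennreal ((norm (x - u))\<^sup>2) \<partial>\<pi>)" for i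
    unfolding \<pi>s \<pi>
    by (rule cell_cost_tendsto[OF gsm weighted(1) gm weighted(2) cells
          weighted_L1_indicator_tendsto_0[OF p gsm weighted(1) gm weighted(2) cells weighted(3)
            Q_conv_cell_symdiff_tendsto_0[OF assms(1,4,5,7), unfolded P]]])
  then show ?thesis unfolding cost_def by (intro tendsto_sum)
qed

end
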